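(* Let $\{(\mathcal{T}^h,\Sigma^h)\}_{h>0}$ be a family of Cartesian tessellations of $\Omega$ with cubic cells of edge length $h$. Let $\{\rho^h\in\mathcal{P}(\mathcal{T}^h)\}_{h>0}$ satisfy $\hat\rho^h\rightharpoonup^*\rho$ weakly-$*$ in $\mathcal{P}(\Omega)$. If $\{\varphi^h:\mathcal{T}^h\to\mathbb{R}\}_{h>0}$ is such that for some $\varphi\in C^1_b(\Omega)$, $\varphi^h_L-\varphi^h_K=\nabla\varphi(x_K)\cdot(x_L-x_K)+o(h)$ uniformly over $(K,L)\in\Sigma^h$, then \[ \lim_{h\to0}\mathcal{R}^*_{\mathrm{up},h}(\rho^h,\overline\nabla\varphi^h)=\frac12\int_\Omega|\nabla\varphi|^2\,\mathrm{d}\rho. \] Consequently, if the interaction potential $W$ satisfies (C$^1$), then $\lim_{h\to0}\mathcal{D}_{\mathrm{up},h}(\rho^h)=\frac12\int_\Omega|\nabla\mathsf{Q}(\rho)|^2\mathrm{d}\rho$.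
   Context: $\Omega\subset\mathbb{R}^d$ open bounded convex. $\mathcal{T}^h$: the cubes of a Cartesian grid of edge length $h$ covering $\Omega$; $\Sigma^h$: ordered pairs of cubes sharing a $(d-1)$-dimensional face $(K|L)$; $x_K$ the center of $K$; $\tau_{K|L}=|(K|L)|/|x_L-x_K|$; $\overline\nabla\varphi(K,L)=\varphi(L)-\varphi(K)$. $\mathrm{d}\hat\rho^h/\mathrm{d}\mathcal{L}^d=\sum_K\frac{\rho^h_K}{|K|}\mathbb{1}_K$; $u_K=\rho_K/|K|$. $\mathcal{R}^*_{\mathrm{up},h}(\rho,\xi)=\sum_{(K,L)\in\Sigma^h}\tau_{K|L}\big(u_K|\xi^+_{K|L}/2|^2+u_L|\xi^-_{K|L}/2|^2\big)$ with $x^\pm\ge0$ positive/negative parts. $V\in\mathrm{Lip}\cap C^1(\mathbb{R}^d)$ bounded below; $W\ge0$, $W(x)=W(-x)$; (C$^1$): $W\in\mathrm{Lip}(\mathbb{R}^d)\cap C^1(\mathbb{R}^d)$. $q_{K|L}=V(x_L)-V(x_K)+\sum_M\rho_M(W(x_L-x_M)-W(x_K-x_M))$; $\mathcal{D}_{\mathrm{up},h}(\rho)=\sum_{\Sigma^h}\tau_{K|L}(u_K|q^+_{K|L}/2|^2+u_L|q^-_{K|L}/2|^2)$; $\mathsf{Q}(\rho)=V+W*\rho$. *)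

theory Defs
  imports "HOL-Probability.Probability"
begin

(* Cartesian grid of edge length h, offset a; cells are indexed by k in Z^d.
   Cell k is the closed cube  a + h*(k + [0,1]^d). *)
definition cube :: "real \<Rightarrow> real^'d \<Rightarrow> int^'d \<Rightarrow> (real^'d) set" where
  "cube h a k = cbox (a + h *\<^sub>R (\<chi> i. real_of_int (k$i)))
                      (a + h *\<^sub>R (\<chi> i. real_of_int (k$i) + 1))"

definition center :: "real \<Rightarrow> real^'d \<Rightarrow> int^'d \<Rightarrow> real^'d" where
  "center h a k = a + h *\<^sub>R (\<chi> i. real_of_int (k$i) + 1/2)"

definition cells :: "(real^'d) set \<Rightarrow> real \<Rightarrow> real^'d \<Rightarrow> (int^'d) set" where
  "cells \<Omega> h a = {k. interior (cube h a k) \<inter> \<Omega> \<noteq> {}}"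

(* Sigma^h: ordered pairs of cells sharing a (d-1)-dimensional face *)
definition edges :: "(real^'d) set \<Rightarrow> real \<Rightarrow> real^'d \<Rightarrow> ((int^'d) \<times> (int^'d)) set" where
  "edges \<Omega> h a = {(k,l). k \<in> cells \<Omega> h a \<and> l \<in> cells \<Omega> h a \<and>
                         (\<Sum>i\<in>UNIV. \<bar>l$i - k$i\<bar>) = 1}"

(* tau_{K|L} = |(K|L)| / |x_L - x_K|, the face (K|L) being a (d-1)-cube of edge h *)
definition tau :: "real \<Rightarrow> real^'d \<Rightarrow> int^'d \<Rightarrow> int^'d \<Rightarrow> real" where
  "tau h a k l = h ^ (CARD('d) - 1) / dist (center h a k) (center h a l)"

definition posp :: "real \<Rightarrow> real" where "posp x = max x 0"
definition negp :: "real \<Rightarrow> real" where "negp x = max (- x) 0"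

definition ucell :: "real \<Rightarrow> real^'d \<Rightarrow> (int^'d \<Rightarrow> real) \<Rightarrow> int^'d \<Rightarrow> real" where
  "ucell h a \<rho> k = \<rho> k / measure lborel (cube h a k)"

definition rhohat :: "(real^'d) set \<Rightarrow> real \<Rightarrow> real^'d \<Rightarrow> (int^'d \<Rightarrow> real) \<Rightarrow> (real^'d) measure" where
  "rhohat \<Omega> h a \<rho> = density lborel
     (\<lambda>x. ennreal (\<Sum>k\<in>cells \<Omega> h a. ucell h a \<rho> k * indicator (cube h a k) x))"

definition gradbar :: "(int^'d \<Rightarrow> real) \<Rightarrow> int^'d \<Rightarrow> int^'d \<Rightarrow> real" where
  "gradbar \<phi> k l = \<phi> l - \<phi> k"

definition Rstar :: "(real^'d) set \<Rightarrow> real \<Rightarrow> real^'d \<Rightarrow> (int^'d \<Rightarrow> real)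
                      \<Rightarrow> (int^'d \<Rightarrow> int^'d \<Rightarrow> real) \<Rightarrow> real" where
  "Rstar \<Omega> h a \<rho> \<xi> = (\<Sum>(k,l)\<in>edges \<Omega> h a.
      tau h a k l * (ucell h a \<rho> k * (posp (\<xi> k l) / 2)\<^sup>2
                    + ucell h a \<rho> l * (negp (\<xi> k l) / 2)\<^sup>2))"

definition qflux :: "(real^'d \<Rightarrow> real) \<Rightarrow> (real^'d \<Rightarrow> real) \<Rightarrow> (real^'d) set \<Rightarrow> real \<Rightarrow> real^'d
                      \<Rightarrow> (int^'d \<Rightarrow> real) \<Rightarrow> int^'d \<Rightarrow> int^'d \<Rightarrow> real" where
  "qflux V W \<Omega> h a \<rho> k l = V (center h a l) - V (center h a k)
     + (\<Sum>m\<in>cells \<Omega> h a. \<rho> m * (W (center h a l - center h a m) - W (center h a k - center h a m)))"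

definition Dup :: "(real^'d \<Rightarrow> real) \<Rightarrow> (real^'d \<Rightarrow> real) \<Rightarrow> (real^'d) set \<Rightarrow> real \<Rightarrow> real^'d
                    \<Rightarrow> (int^'d \<Rightarrow> real) \<Rightarrow> real" where
  "Dup V W \<Omega> h a \<rho> = Rstar \<Omega> h a \<rho> (qflux V W \<Omega> h a \<rho>)"

definition grad :: "(real^'d \<Rightarrow> real) \<Rightarrow> real^'d \<Rightarrow> real^'d" where
  "grad f x = (\<chi> i. frechet_derivative f (at x) (axis i 1))"

definition C1fun :: "(real^'d \<Rightarrow> real) \<Rightarrow> bool" where
  "C1fun f \<longleftrightarrow> (\<forall>x. f differentiable (at x)) \<and> continuous_on UNIV (grad f)"

definition Qpot :: "(real^'d \<Rightarrow> real) \<Rightarrow> (real^'d \<Rightarrow> real) \<Rightarrow> (real^'d) measure \<Rightarrow> real^'d \<Rightarrow> real" where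
  "Qpot V W \<mu> x = V x + (\<integral>y. W (x - y) \<partial>\<mu>)"

end

theory Submission
  imports Defs
begin

text \<open>
  With \<open>\<tau> u = \<rho> / h\<^sup>2\<close>, the upwind dissipation is the sum over ordered edges of
  \<open>\<rho>\<^sub>K ((\<xi>\<^sub>K\<^sub>L / h)\<^sub>+\<^sup>2 + (- \<xi>\<^sub>L\<^sub>K / h)\<^sub>+\<^sup>2) / 4\<close>.  If \<open>\<xi>\<^sub>K\<^sub>L = h G(x\<^sub>K) \<bullet> e\<^sub>K\<^sub>L + o(h)\<close>
  with \<open>G\<close> continuous, both terms equal \<open>(G(x\<^sub>K) \<bullet> e\<^sub>K\<^sub>L)\<^sub>+\<^sup>2 + o(1)\<close>, and summing positive
  parts over the \<open>2d\<close> neighbours of \<open>K\<close> returns \<open>|G(x\<^sub>K)|\<^sup>2\<close>.  Only cells with a neighbour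
  outside the grid lose terms; their centres lie within \<open>h\<close> of \<open>- \<Omega>\<close>, so their mass vanishes
  because the limit \<open>\<mu>\<close> is carried by the open set \<open>\<Omega>\<close>.  What remains is the Riemann sum
  \<open>\<Sum>\<^sub>K \<rho>\<^sub>K |G(x\<^sub>K)|\<^sup>2\<close>, which tends to \<open>\<integral> |G|\<^sup>2 d\<mu>\<close> by the weak convergence of the
  reconstructions, the cells being uniformly small.

  For \<open>D\<^sub>u\<^sub>p\<close> the flux \<open>q\<^sub>K\<^sub>L\<close> is a difference of \<open>V + W * \<rho>\<^sup>h\<close>; uniform Taylor expansions
  and the uniform convergence of \<open>(\<nabla>W) * \<rho>\<^sup>h\<close> to \<open>(\<nabla>W) * \<mu>\<close> on compact sets show that it
  is such a flux, with \<open>G = \<nabla>V + (\<nabla>W) * \<mu> = \<nabla>Q(\<mu>)\<close>.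
\<close>

section \<open>Grid geometry\<close>

definition of_int_vec :: "int^'d \<Rightarrow> real^'d" where
  "of_int_vec z = (\<chi> i. real_of_int (z$i))"

lemma center_diff: "center h a l - center h a k = h *\<^sub>R of_int_vec (l - k)"
  by (simp add: center_def of_int_vec_def vec_eq_iff algebra_simps)

lemma of_int_vec_uminus: "of_int_vec (- z) = - of_int_vec z"
  by (simp add: of_int_vec_def vec_eq_iff)

definition grid_nbrs :: "int^'d \<Rightarrow> (int^'d) set" where
  "grid_nbrs k = {l. (\<Sum>i\<in>UNIV. \<bar>l$i - k$i\<bar>) = 1}"

lemma grid_nbrs_sym: "l \<in> grid_nbrs k \<longleftrightarrow> k \<in> grid_nbrs l"
  by (simp add: grid_nbrs_def abs_minus_commute)

lemma l1_norm_one_eq_axis: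
  fixes z :: "int^'d"
  assumes "(\<Sum>i\<in>UNIV. \<bar>z$i\<bar>) = 1"
  shows "\<exists>i. \<exists>s\<in>{1,-1}. z = s *s axis i 1"
proof -
  have le: "\<bar>z$j\<bar> \<le> 1" for j
    using member_le_sum[of j UNIV "\<lambda>i. \<bar>z$i\<bar>"] assms by auto
  obtain i where "z$i \<noteq> 0"
    using assms by (metis (mono_tags, lifting) abs_zero sum.neutral zero_neq_one)
  with le[of i] have zi: "\<bar>z$i\<bar> = 1" by auto
  have "(\<Sum>j\<in>UNIV. \<bar>z$j\<bar>) = \<bar>z$i\<bar> + (\<Sum>j\<in>UNIV-{i}. \<bar>z$j\<bar>)"
    by (simp add: sum.remove)
  with assms zi have "(\<Sum>j\<in>UNIV-{i}. \<bar>z$j\<bar>) = 0" by simp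
  then have "\<forall>j\<in>UNIV-{i}. \<bar>z$j\<bar> = 0"
    by (subst (asm) sum_nonneg_eq_0_iff) auto
  then have "z = (z$i) *s axis i 1"
    by (auto simp: vec_eq_iff axis_def)
  moreover have "z$i \<in> {1,-1}" using zi by auto
  ultimately show ?thesis by blast
qed

lemma grid_nbrs_eq_image:
  fixes k :: "int^'d"
  shows "grid_nbrs k = (\<lambda>(i,s). k + s *s axis i 1) ` (UNIV \<times> {1,-1})"
proof -
  have l1_axis: "(\<Sum>j\<in>UNIV. \<bar>(s *s axis i 1 :: int^'d)$j\<bar>) = 1" if "s \<in> {1,-1}" for s :: int and i
  proof -
    have "(\<Sum>j\<in>UNIV. \<bar>(s *s axis i 1 :: int^'d)$j\<bar>) = (\<Sum>j\<in>UNIV. if j = i then 1 else 0::int)"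
      using that by (intro sum.cong) (auto simp: axis_def)
    then show ?thesis by simp
  qed
  show ?thesis
  proof
    show "grid_nbrs k \<subseteq> (\<lambda>(i,s). k + s *s axis i 1) ` (UNIV \<times> {1,-1})"
    proof
      fix l assume "l \<in> grid_nbrs k"
      then have "(\<Sum>i\<in>UNIV. \<bar>(l - k)$i\<bar>) = 1" by (simp add: grid_nbrs_def)
      then obtain i s where "s \<in> {1,-1}" "l - k = s *s axis i 1"
        using l1_norm_one_eq_axis by blast
      then show "l \<in> (\<lambda>(i,s). k + s *s axis i 1) ` (UNIV \<times> {1,-1})"
        by (auto intro!: image_eqI[where x="(i,s)"] simp: algebra_simps)
    qed
    show "(\<lambda>(i,s). k + s *s axis i 1) ` (UNIV \<times> {1,-1}) \<subseteq> grid_nbrs k"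
    proof clarify
      fix i :: 'd and s :: int assume "s \<in> {1,-1}"
      then show "k + s *s axis i 1 \<in> grid_nbrs k"
        using l1_axis[of s i] unfolding grid_nbrs_def by simp
    qed
  qed
qed

lemma inj_on_grid_nbrs_param:
  fixes k :: "int^'d"
  shows "inj_on (\<lambda>(i,s). k + s *s axis i 1) (UNIV \<times> {1,-1})"
proof (rule inj_onI, clarify)
  fix i j :: 'd and s t :: int
  assume "s \<in> {1,-1}" "t \<in> {1,-1}" and "k + s *s axis i 1 = k + t *s axis j 1"
  then have "(s *s axis i 1 :: int^'d) $ i = (t *s axis j 1) $ i"
    and "(s *s axis i 1 :: int^'d) $ j = (t *s axis j 1) $ j" by simp_all
  with \<open>s \<in> {1,-1}\<close> \<open>t \<in> {1,-1}\<close> show "i = j \<and> s = t"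
    by (auto simp: axis_def split: if_splits)
qed

lemma finite_grid_nbrs: "finite (grid_nbrs k)"
  by (simp add: grid_nbrs_eq_image)

lemma card_grid_nbrs: "card (grid_nbrs (k::int^'d)) = 2 * CARD('d)"
  unfolding grid_nbrs_eq_image
  by (subst card_image[OF inj_on_grid_nbrs_param]) (simp add: card_cartesian_product)

lemma norm_of_int_vec_nbr:
  fixes k l :: "int^'d"
  assumes "l \<in> grid_nbrs k"
  shows "norm (of_int_vec (l - k)) = 1"
proof -
  obtain i :: 'd and s :: int where "s \<in> {1,-1}" "l = k + s *s axis i 1"
    using assms unfolding grid_nbrs_eq_image by auto
  moreover have "of_int_vec (s *s axis i 1 :: int^'d) = real_of_int s *\<^sub>R axis i 1"
    by (simp add: of_int_vec_def vec_eq_iff axis_def)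
  ultimately show ?thesis by auto
qed

lemma dist_center_nbr:
  assumes "l \<in> grid_nbrs k" "h > 0"
  shows "dist (center h a k) (center h a l) = h"
proof -
  have "dist (center h a k) (center h a l) = norm (center h a l - center h a k)"
    by (simp add: dist_norm norm_minus_commute)
  then show ?thesis
    using assms norm_of_int_vec_nbr[OF assms(1)] by (simp add: center_diff)
qed

text \<open>Each axis contributes \<open>(G$i)\<^sup>2\<close> exactly once, from the neighbour on the side where
  \<open>G$i\<close> points.\<close>
lemma sum_grid_nbrs_posp_sq:
  fixes G :: "real^'d"
  shows "(\<Sum>l\<in>grid_nbrs k. (posp (G \<bullet> of_int_vec (l - k)))\<^sup>2) = (norm G)\<^sup>2"
proof -
  have "(\<Sum>l\<in>grid_nbrs k. (posp (G \<bullet> of_int_vec (l - k)))\<^sup>2)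
      = (\<Sum>(i,s)\<in>UNIV \<times> {1,-1}. (posp (G \<bullet> of_int_vec (s *s axis i 1)))\<^sup>2)"
    unfolding grid_nbrs_eq_image
    by (subst sum.reindex[OF inj_on_grid_nbrs_param]) (simp add: case_prod_unfold)
  also have "\<dots> = (\<Sum>i\<in>UNIV. (posp (G$i))\<^sup>2 + (posp (- G$i))\<^sup>2)"
    by (subst sum.cartesian_product[symmetric])
       (simp add: of_int_vec_def axis_def inner_vec_def if_distrib cong: if_cong)
  also have "\<dots> = (\<Sum>i\<in>UNIV. (G$i)\<^sup>2)"
    by (intro sum.cong) (auto simp: posp_def max_def power2_eq_square)
  also have "\<dots> = (norm G)\<^sup>2"
    by (simp add: norm_vec_def L2_set_def sum_nonneg)
  finally show ?thesis .
qed

lemma center_in_interior_cube: "h > 0 \<Longrightarrow> center h a k \<in> interior (cube h a k)"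
  by (auto simp: cube_def center_def mem_box_cart)

lemma center_in_cube: "h > 0 \<Longrightarrow> center h a k \<in> cube h a k"
  using center_in_interior_cube interior_subset by blast

lemma cube_component_dist:
  assumes "x \<in> cube h a k"
  shows "\<bar>x$i - center h a k $ i\<bar> \<le> h/2"
proof -
  have "a$i + h * real_of_int (k$i) \<le> x$i" "x$i \<le> a$i + h * real_of_int (k$i) + h"
    using assms by (auto simp: cube_def mem_box_cart algebra_simps)
  moreover have "center h a k $ i = a$i + h * real_of_int (k$i) + h/2"
    by (simp add: center_def algebra_simps)
  ultimately show ?thesis unfolding abs_le_iff by linarith
qed

lemma norm_le_card_mult:
  fixes v :: "real^'d"
  assumes "\<And>i. \<bar>v$i\<bar> \<le> c"
  shows "norm v \<le> real CARD('d) * c"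
proof -
  have "norm v \<le> (\<Sum>i\<in>UNIV. \<bar>v$i\<bar>)" by (rule norm_le_l1_cart)
  also have "\<dots> \<le> (\<Sum>i\<in>(UNIV::'d set). c)" by (rule sum_mono) (use assms in auto)
  finally show ?thesis by simp
qed

lemma norm_diff_cube_le:
  assumes "x \<in> cube h a k" "y \<in> cube h a (k::int^'d)"
  shows "norm (x - y) \<le> real CARD('d) * h"
proof (rule norm_le_card_mult)
  fix i show "\<bar>(x - y) $ i\<bar> \<le> h"
    using cube_component_dist[OF assms(1), of i] cube_component_dist[OF assms(2), of i]
    unfolding abs_le_iff vector_minus_component by linarith
qed

lemma cube_borel [measurable]: "cube h a k \<in> sets borel"
  by (simp add: cube_def)

lemma measure_cube:
  assumes "h > 0"
  shows "measure lborel (cube h a (k::int^'d)) = h ^ CARD('d)"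
proof -
  let ?l = "a + h *\<^sub>R (\<chi> i. real_of_int (k$i))" and ?u = "a + h *\<^sub>R (\<chi> i. real_of_int (k$i) + 1)"
  have edge: "(?u - ?l) \<bullet> b = h" if "b \<in> Basis" for b
    using that by (auto simp: Basis_vec_def inner_axis algebra_simps)
  have "\<forall>b\<in>Basis. ?l \<bullet> b \<le> ?u \<bullet> b"
    using edge assms by (metis inner_diff_left diff_ge_0_iff_ge less_imp_le)
  then have "measure lborel (cube h a k) = (\<Prod>b\<in>Basis. (?u - ?l) \<bullet> b)"
    unfolding cube_def measure_lborel_cbox_eq by simp
  also have "\<dots> = (\<Prod>b\<in>(Basis::(real^'d) set). h)" by (rule prod.cong) (use edge in auto)
  finally show ?thesis by simp
qed

lemma cube_average_close:
  fixes g :: "real^'d \<Rightarrow> real"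
  assumes h: "h > 0" and g: "continuous_on UNIV g"
    and close: "\<And>x. x \<in> cube h a k \<Longrightarrow> \<bar>g x - c\<bar> \<le> e"
  shows "\<bar>(\<integral>x. indicator (cube h a k) x * g x \<partial>lborel) / measure lborel (cube h a k) - c\<bar> \<le> e"
proof -
  let ?I = "indicator (cube h a k) :: real^'d \<Rightarrow> real" and ?m = "measure lborel (cube h a k)"
  have m: "?m > 0" using measure_cube[OF h, of a k] h by simp
  have int: "integrable lborel (\<lambda>x. ?I x * f x)" if "continuous_on UNIV f" for f
    using borel_integrable_compact[of "cube h a k" f] that
    by (auto simp: cube_def intro: continuous_on_subset)
  have int_const: "(\<integral>x. ?I x * r \<partial>lborel) = ?m * r" for r
    by simp
  have "\<bar>(\<integral>x. ?I x * g x \<partial>lborel) - ?m * c\<bar> = \<bar>\<integral>x. ?I x * (g x - c) \<partial>lborel\<bar>"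
    using int[OF g] int[of "\<lambda>_. c"] by (simp add: right_diff_distrib int_const)
  also have "\<dots> \<le> (\<integral>x. ?I x * e \<partial>lborel)"
    by (rule integral_abs_bound_integral)
       (use int[OF g] int[of "\<lambda>_. c"] int[of "\<lambda>_. e"] close in
        \<open>auto simp: right_diff_distrib indicator_def abs_mult\<close>)
  also have "\<dots> = ?m * e" by (rule int_const)
  finally show ?thesis using m by (simp add: field_simps abs_le_iff)
qed

lemma posp_scale: "h > 0 \<Longrightarrow> posp (h * z) = h * posp z"
  by (auto simp: posp_def max_def mult_le_0_iff zero_le_mult_iff)

lemma negp_eq_posp_uminus: "negp x = posp (- x)"
  by (simp add: posp_def negp_def)

lemma posp_sq_close:
  assumes "\<bar>x - y\<bar> \<le> \<eta>" "\<bar>y\<bar> \<le> M" "\<eta> \<le> 1"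
  shows "\<bar>(posp x)\<^sup>2 - (posp y)\<^sup>2\<bar> \<le> \<eta> * (2 * M + 1)"
proof -
  have "(posp x)\<^sup>2 - (posp y)\<^sup>2 = (posp x - posp y) * (posp x + posp y)"
    by (simp add: power2_eq_square algebra_simps)
  then have "\<bar>(posp x)\<^sup>2 - (posp y)\<^sup>2\<bar> = \<bar>posp x - posp y\<bar> * (posp x + posp y)"
    by (simp add: abs_mult posp_def)
  also have "\<dots> \<le> \<eta> * (2 * M + 1)"
    by (rule mult_mono) (use assms in \<open>auto simp: posp_def\<close>)
  finally show ?thesis .
qed

lemma bounded_linear_eq_inner_cart:
  fixes D :: "real^'d \<Rightarrow> real"
  assumes "bounded_linear D"
  shows "D v = (\<chi> i. D (axis i 1)) \<bullet> v"
proof -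
  interpret D: bounded_linear D by fact
  have "D v = D (\<Sum>i\<in>UNIV. v$i *\<^sub>R axis i 1)"
    using basis_expansion[of v] by (simp add: scalar_mult_eq_scaleR)
  also have "\<dots> = (\<Sum>i\<in>UNIV. v$i * D (axis i 1))" by (simp add: D.sum D.scale)
  also have "\<dots> = (\<chi> i. D (axis i 1)) \<bullet> v" by (simp add: inner_vec_def mult.commute)
  finally show ?thesis .
qed

lemma has_derivative_grad:
  fixes f :: "real^'d \<Rightarrow> real"
  assumes "f differentiable (at x)"
  shows "(f has_derivative (\<lambda>v. grad f x \<bullet> v)) (at x)"
proof -
  have d: "(f has_derivative frechet_derivative f (at x)) (at x)"
    using assms frechet_derivative_works by blast
  have "frechet_derivative f (at x) = (\<lambda>v. grad f x \<bullet> v)"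
    unfolding grad_def by (rule ext, rule bounded_linear_eq_inner_cart[OF has_derivative_bounded_linear[OF d]])
  then show ?thesis using d by simp
qed

lemma grad_eqI:
  fixes f :: "real^'d \<Rightarrow> real"
  assumes "(f has_derivative (\<lambda>v. w \<bullet> v)) (at x)"
  shows "grad f x = w"
proof -
  have "frechet_derivative f (at x) = (\<lambda>v. w \<bullet> v)" using frechet_derivative_at[OF assms] by simp
  then show ?thesis unfolding grad_def by (simp add: vec_eq_iff inner_axis)
qed

lemma C1fun_continuous_on: "C1fun f \<Longrightarrow> continuous_on UNIV f"
  unfolding C1fun_def
  by (intro continuous_at_imp_continuous_on ballI differentiable_imp_continuous_within) auto

text \<open>Mean value inequality for \<open>f - grad f x \<bullet> _\<close> on the segment \<open>[x, y]\<close>, where \<open>grad f\<close>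
  is uniformly close to \<open>grad f x\<close>.\<close>
lemma C1fun_uniform_taylor:
  fixes f :: "real^'d \<Rightarrow> real"
  assumes C1: "C1fun f" and S: "compact S" "convex S" and e: "e > 0"
  shows "\<exists>\<delta>>0. \<forall>x\<in>S. \<forall>y\<in>S. dist x y < \<delta> \<longrightarrow> \<bar>f y - f x - grad f x \<bullet> (y - x)\<bar> \<le> e * norm (y - x)"
proof -
  have diff: "\<And>z. f differentiable (at z)" and cg: "continuous_on UNIV (grad f)"
    using C1 by (auto simp: C1fun_def)
  have "uniformly_continuous_on S (grad f)"
    by (rule compact_uniformly_continuous[OF continuous_on_subset[OF cg] S(1)]) auto
  then obtain \<delta> where "\<delta> > 0" and \<delta>: "\<forall>x\<in>S. \<forall>y\<in>S. dist y x < \<delta> \<longrightarrow> dist (grad f y) (grad f x) < e"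
    unfolding uniformly_continuous_on_def using e by blast
  show ?thesis
  proof (intro exI[of _ \<delta>] conjI ballI impI)
    show "\<delta> > 0" by fact
    fix x y assume x: "x \<in> S" and y: "y \<in> S" and dxy: "dist x y < \<delta>"
    let ?T = "closed_segment x y"
    define F where "F z = f z - grad f x \<bullet> z" for z
    have dF: "(F has_derivative (\<lambda>v. (grad f z - grad f x) \<bullet> v)) (at z within ?T)" for z
    proof -
      have "((\<lambda>z. f z - grad f x \<bullet> z) has_derivative (\<lambda>v. grad f z \<bullet> v - grad f x \<bullet> v)) (at z)"
        by (intro derivative_intros has_derivative_grad diff)
      then show ?thesis unfolding F_def by (auto simp: inner_diff_left intro: has_derivative_at_withinI)
    qed
    have "onorm (\<lambda>v. (grad f z - grad f x) \<bullet> v) \<le> e" if z: "z \<in> ?T" for z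
    proof (rule onorm_le)
      fix v
      have "dist z x < \<delta>" using dist_in_closed_segment[OF z] dxy by simp
      moreover have "z \<in> S" using S(2) x y z closed_segment_subset by blast
      ultimately have "norm (grad f z - grad f x) < e" using \<delta> x by (auto simp: dist_norm)
      then show "norm ((grad f z - grad f x) \<bullet> v) \<le> e * norm v"
        using Cauchy_Schwarz_ineq2[of "grad f z - grad f x" v]
        by (simp add: order.trans[OF _ mult_right_mono])
    qed
    then have "norm (F y - F x) \<le> e * norm (y - x)"
      by (intro differentiable_bound[OF convex_closed_segment dF]) auto
    then show "\<bar>f y - f x - grad f x \<bullet> (y - x)\<bar> \<le> e * norm (y - x)"
      by (simp add: F_def inner_diff_right algebra_simps)
  qed
qed

lemma tendsto_zero_if_eventually_le:
  fixes g :: "'a \<Rightarrow> 'b::real_normed_vector"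
  assumes "\<And>e. e > 0 \<Longrightarrow> eventually (\<lambda>x. norm (g x) \<le> e) F"
  shows "(g \<longlongrightarrow> 0) F"
proof (rule tendstoI)
  fix e :: real assume "e > 0"
  with assms[of "e/2"] show "eventually (\<lambda>x. dist (g x) 0 < e) F"
    by (auto elim: eventually_mono)
qed

lemma Rstar_summand_eq:
  assumes h: "h > 0" and l: "l \<in> grid_nbrs k"
  shows "tau h a k l * (ucell h a \<rho> k * (posp \<xi> / 2)\<^sup>2 + ucell h a \<rho> (l::int^'d) * (negp \<xi> / 2)\<^sup>2)
       = (\<rho> k * (posp (\<xi>/h))\<^sup>2 + \<rho> l * (posp (- (\<xi>/h)))\<^sup>2) / 4"
proof -
  obtain m where m: "CARD('d) = Suc m" using not0_implies_Suc[of "CARD('d)"] by auto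
  have tau: "tau h a k l = h ^ m / h" unfolding tau_def dist_center_nbr[OF l h] m by simp
  have u: "ucell h a \<rho> j = \<rho> j / (h ^ m * h)" for j
    unfolding ucell_def measure_cube[OF h] m by (simp add: mult.commute)
  have "posp \<xi> = h * posp (\<xi>/h)" "negp \<xi> = h * posp (- (\<xi>/h))"
    using posp_scale[OF h, of "\<xi>/h"] posp_scale[OF h, of "-(\<xi>/h)"] h
    by (simp_all add: negp_eq_posp_uminus)
  moreover have "h ^ m > 0" using h by simp
  ultimately show ?thesis unfolding tau u using h by (simp add: field_simps power2_eq_square)
qed

lemma div_mesh_close:
  assumes "\<bar>\<xi> - G \<bullet> (center h a l - center h a k)\<bar> \<le> c * h" "h > 0"
  shows "\<bar>\<xi> / h - G \<bullet> of_int_vec (l - k)\<bar> \<le> c"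
proof -
  have "\<xi> / h - G \<bullet> of_int_vec (l - k) = (\<xi> - G \<bullet> (center h a l - center h a k)) / h"
    using assms(2) by (simp add: center_diff field_simps)
  then show ?thesis using assms by (simp add: abs_divide divide_le_eq)
qed

lemma upwind_pair_close:
  fixes x y g g' \<eta> M :: real
  assumes "\<bar>x - g\<bar> \<le> \<eta>/2" "\<bar>y - g'\<bar> \<le> \<eta>/2" "\<bar>g + g'\<bar> \<le> \<eta>/2" "\<bar>g\<bar> \<le> M" "\<eta> \<le> 1"
  shows "\<bar>((posp x)\<^sup>2 + (posp (- y))\<^sup>2) / 4 - (posp g)\<^sup>2 / 2\<bar> \<le> \<eta> * (2 * M + 1) / 2"
proof -
  have "\<bar>x - g\<bar> \<le> \<eta>" "\<bar>- y - g\<bar> \<le> \<eta>" using assms(1-3) unfolding abs_le_iff by auto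
  then have "\<bar>(posp x)\<^sup>2 + (posp (- y))\<^sup>2 - 2 * (posp g)\<^sup>2\<bar> \<le> 2 * (\<eta> * (2 * M + 1))"
    using posp_sq_close[OF _ assms(4,5)] by (smt (verit))
  moreover have "((posp x)\<^sup>2 + (posp (- y))\<^sup>2) / 4 - (posp g)\<^sup>2 / 2
               = ((posp x)\<^sup>2 + (posp (- y))\<^sup>2 - 2 * (posp g)\<^sup>2) / 4" by simp
  ultimately show ?thesis by (simp only: abs_divide) simp
qed

lemma continuous_on_translate:
  fixes g :: "real^'d \<Rightarrow> 'b::topological_space"
  shows "continuous_on UNIV g \<Longrightarrow> continuous_on UNIV (\<lambda>y. g (x - y))"
  by (rule continuous_on_compose2[of UNIV g]) (auto intro: continuous_intros)

section \<open>Riemann sums of the discrete measures\<close>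

locale grid_weak_convergence = prob_space \<mu> for \<mu> :: "(real^'d) measure" +
  fixes \<Omega> :: "(real^'d) set" and a :: "real \<Rightarrow> real^'d" and \<rho>h :: "real \<Rightarrow> int^'d \<Rightarrow> real"
  assumes \<Omega>_open: "open \<Omega>" and \<Omega>_bounded: "bounded \<Omega>"
    and \<rho>h_nonneg: "\<And>h k. h > 0 \<Longrightarrow> k \<in> cells \<Omega> h (a h) \<Longrightarrow> \<rho>h h k \<ge> 0"
    and \<rho>h_sum: "\<And>h. h > 0 \<Longrightarrow> (\<Sum>k\<in>cells \<Omega> h (a h). \<rho>h h k) = 1"
    and sets_\<mu>: "sets \<mu> = sets borel" and \<mu>_\<Omega>: "measure \<mu> \<Omega> = 1"
    and weak: "\<And>f :: real^'d \<Rightarrow> real. continuous_on UNIV f \<Longrightarrow> bounded (range f) \<Longrightarrow>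
        ((\<lambda>h. \<integral>x. f x \<partial>(rhohat \<Omega> h (a h) (\<rho>h h))) \<longlongrightarrow> (\<integral>x. f x \<partial>\<mu>)) (at_right 0)"
begin

abbreviation "cl h \<equiv> cells \<Omega> h (a h)"
abbreviation "ctr h k \<equiv> center h (a h) k"
abbreviation "E h \<equiv> edges \<Omega> h (a h)"

text \<open>Finiteness is forced by the normalisation: a sum over an infinite set is \<open>0\<close>.\<close>
lemma finite_cl: "h > 0 \<Longrightarrow> finite (cl h)"
  using \<rho>h_sum[of h] by (metis sum.infinite zero_neq_one)

lemma edges_eq_Sigma: "E h = Sigma (cl h) (\<lambda>k. grid_nbrs k \<inter> cl h)"
  by (auto simp: edges_def grid_nbrs_def)

lemma sum_edges: "h > 0 \<Longrightarrow> (\<Sum>(k,l)\<in>E h. f k l) = (\<Sum>k\<in>cl h. \<Sum>l\<in>grid_nbrs k \<inter> cl h. f k l)"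
  unfolding edges_eq_Sigma by (rule sum.Sigma[symmetric]) (auto simp: finite_cl finite_grid_nbrs)

lemma sum_edges_swap: "(\<Sum>(k,l)\<in>E h. f k l) = (\<Sum>(k,l)\<in>E h. f l k)"
  by (rule sum.reindex_bij_witness[where i=prod.swap and j=prod.swap])
     (auto simp: edges_eq_Sigma grid_nbrs_sym)

definition \<Omega>_radius :: real where
  "\<Omega>_radius = (SOME R. \<forall>x\<in>\<Omega>. norm x \<le> R)"

lemma norm_le_\<Omega>_radius: "x \<in> \<Omega> \<Longrightarrow> norm x \<le> \<Omega>_radius"
  using someI_ex[OF \<Omega>_bounded[unfolded bounded_iff]] unfolding \<Omega>_radius_def by auto

abbreviation "cell_ball \<equiv> cball (0::real^'d) (\<Omega>_radius + real CARD('d))"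

lemma cube_subset_cell_ball:
  assumes "0 < h" "h \<le> 1" "k \<in> cl h"
  shows "cube h (a h) k \<subseteq> cell_ball"
proof
  fix x assume x: "x \<in> cube h (a h) k"
  obtain p where p: "p \<in> interior (cube h (a h) k)" "p \<in> \<Omega>"
    using assms(3) by (auto simp: cells_def)
  have "norm (x - p) \<le> real CARD('d) * h"
    using norm_diff_cube_le[OF x] p(1) interior_subset by blast
  also have "\<dots> \<le> real CARD('d)" using assms by (simp add: mult_left_le)
  finally show "x \<in> cell_ball"
    using norm_le_\<Omega>_radius[OF p(2)] norm_triangle_sub[of x p] by simp
qed

lemma center_in_cell_ball: "0 < h \<Longrightarrow> h \<le> 1 \<Longrightarrow> k \<in> cl h \<Longrightarrow> ctr h k \<in> cell_ball"
  using cube_subset_cell_ball center_in_cube by blast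

lemma \<Omega>_subset_cell_ball: "\<Omega> \<subseteq> cell_ball"
proof
  fix x assume "x \<in> \<Omega>"
  then have "norm x \<le> \<Omega>_radius" by (rule norm_le_\<Omega>_radius)
  moreover have "real CARD('d) \<ge> 0" by simp
  ultimately show "x \<in> cell_ball" by simp
qed

lemma AE_in_\<Omega>: "AE x in \<mu>. x \<in> \<Omega>"
  using AE_prob_1[OF \<mu>_\<Omega>] .

lemma continuous_imp_borel_measurable: "continuous_on UNIV f \<Longrightarrow> f \<in> borel_measurable \<mu>"
  using borel_measurable_continuous_onI measurable_cong_sets[OF sets_\<mu> refl] by blast

lemma continuous_bounded_on_cell_ball:
  fixes f :: "real^'d \<Rightarrow> 'b::real_normed_vector"
  assumes "continuous_on UNIV f"
  obtains M where "M \<ge> 0" "\<And>x. x \<in> cell_ball \<Longrightarrow> norm (f x) \<le> M"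
proof -
  have "compact (f ` cell_ball)"
    by (intro compact_continuous_image continuous_on_subset[OF assms]) auto
  then obtain M where "\<forall>y\<in>f ` cell_ball. norm y \<le> M"
    using compact_imp_bounded bounded_iff by metis
  then show ?thesis by (intro that[of "max M 0"]) (auto intro: le_max_iff_disj[THEN iffD2])
qed

lemma continuous_imp_integrable:
  fixes f :: "real^'d \<Rightarrow> 'b::{banach, second_countable_topology}"
  assumes "continuous_on UNIV f"
  shows "integrable \<mu> f"
proof -
  obtain B where B: "\<And>x. x \<in> cell_ball \<Longrightarrow> norm (f x) \<le> B"
    using continuous_bounded_on_cell_ball[OF assms] by blast
  have "AE x in \<mu>. norm (f x) \<le> B"
    using AE_in_\<Omega> by eventually_elim (use B \<Omega>_subset_cell_ball in auto)
  then show ?thesis by (intro integrable_const_bound continuous_imp_borel_measurable assms)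
qed

lemma norm_integral_diff_le:
  fixes p q :: "real^'d \<Rightarrow> 'b::{banach, second_countable_topology}"
  assumes "continuous_on UNIV p" "continuous_on UNIV q"
    and close: "\<And>y. y \<in> \<Omega> \<Longrightarrow> norm (p y - q y) \<le> c"
  shows "norm ((\<integral>y. p y \<partial>\<mu>) - (\<integral>y. q y \<partial>\<mu>)) \<le> c"
proof -
  have int: "integrable \<mu> p" "integrable \<mu> q" using assms continuous_imp_integrable by auto
  have "norm ((\<integral>y. p y \<partial>\<mu>) - (\<integral>y. q y \<partial>\<mu>)) = norm (\<integral>y. p y - q y \<partial>\<mu>)"
    using int by simp
  also have "\<dots> \<le> (\<integral>y. norm (p y - q y) \<partial>\<mu>)" by (rule integral_norm_bound)
  also have "\<dots> \<le> (\<integral>y. c \<partial>\<mu>)"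
    by (rule integral_mono_AE) (use int AE_in_\<Omega> close in \<open>auto elim: eventually_mono\<close>)
  finally show ?thesis by (simp add: prob_space)
qed

definition riemann_sum :: "real \<Rightarrow> (real^'d \<Rightarrow> 'b::real_normed_vector) \<Rightarrow> 'b" where
  "riemann_sum h f = (\<Sum>k\<in>cl h. \<rho>h h k *\<^sub>R f (ctr h k))"

lemma riemann_sum_diff: "riemann_sum h (\<lambda>x. f x - g x) = riemann_sum h f - riemann_sum h g"
  by (simp add: riemann_sum_def scaleR_diff_right sum_subtractf)

lemma norm_riemann_sum_le:
  assumes h: "0 < h" "h \<le> 1" and bound: "\<And>x. x \<in> cell_ball \<Longrightarrow> norm (f x) \<le> c"
  shows "norm (riemann_sum h f) \<le> c"
proof -
  have "norm (riemann_sum h f) \<le> (\<Sum>k\<in>cl h. norm (\<rho>h h k *\<^sub>R f (ctr h k)))"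
    unfolding riemann_sum_def by (rule norm_sum)
  also have "\<dots> \<le> (\<Sum>k\<in>cl h. \<rho>h h k * c)"
    by (rule sum_mono) (use \<rho>h_nonneg bound center_in_cell_ball h in \<open>auto intro: mult_left_mono\<close>)
  also have "\<dots> = c" using \<rho>h_sum h by (simp add: sum_distrib_right[symmetric])
  finally show ?thesis .
qed

lemma integral_rhohat:
  fixes f :: "real^'d \<Rightarrow> real"
  assumes h: "h > 0" and f: "continuous_on UNIV f"
  shows "(\<integral>x. f x \<partial>rhohat \<Omega> h (a h) (\<rho>h h))
       = (\<Sum>k\<in>cl h. \<rho>h h k * ((\<integral>x. indicator (cube h (a h) k) x * f x \<partial>lborel)
                                 / measure lborel (cube h (a h) k)))"
proof -
  let ?g = "\<lambda>x. \<Sum>k\<in>cl h. ucell h (a h) (\<rho>h h) k * indicator (cube h (a h) k) x"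
  have int: "integrable lborel (\<lambda>x. indicator (cube h (a h) k) x * f x)" for k
    using borel_integrable_compact[of "cube h (a h) k" f] f
    by (auto simp: cube_def intro: continuous_on_subset)
  have "(\<integral>x. f x \<partial>rhohat \<Omega> h (a h) (\<rho>h h)) = (\<integral>x. ?g x *\<^sub>R f x \<partial>lborel)"
    unfolding rhohat_def
    by (rule integral_density)
       (use borel_measurable_continuous_onI[OF f] \<rho>h_nonneg[OF h] in
        \<open>auto simp: ucell_def intro!: AE_I2 sum_nonneg\<close>)
  also have "\<dots> = (\<Sum>k\<in>cl h. ucell h (a h) (\<rho>h h) k * (\<integral>x. indicator (cube h (a h) k) x * f x \<partial>lborel))"
    using int by (simp add: sum_distrib_right mult.assoc)
  finally show ?thesis by (simp add: ucell_def)
qed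

lemma riemann_sum_rhohat_diff_tendsto:
  fixes f :: "real^'d \<Rightarrow> real"
  assumes f: "continuous_on UNIV f"
  shows "((\<lambda>h. riemann_sum h f - (\<integral>x. f x \<partial>rhohat \<Omega> h (a h) (\<rho>h h))) \<longlongrightarrow> 0) (at_right 0)"
proof (rule tendsto_zero_if_eventually_le)
  fix e :: real assume e: "e > 0"
  have "uniformly_continuous_on cell_ball f"
    by (rule compact_uniformly_continuous[OF continuous_on_subset[OF f]]) auto
  then obtain \<delta> where "\<delta> > 0" and \<delta>: "\<forall>x\<in>cell_ball. \<forall>y\<in>cell_ball. dist y x < \<delta> \<longrightarrow> dist (f y) (f x) < e"
    unfolding uniformly_continuous_on_def using e by blast
  have "eventually (\<lambda>h. 0 < h \<and> h < min 1 (\<delta> / real CARD('d))) (at_right 0)"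
    unfolding eventually_at_right_field using \<open>\<delta> > 0\<close> by (intro exI[of _ "min 1 (\<delta> / real CARD('d))"]) auto
  then show "eventually (\<lambda>h. norm (riemann_sum h f - (\<integral>x. f x \<partial>rhohat \<Omega> h (a h) (\<rho>h h))) \<le> e) (at_right 0)"
  proof eventually_elim
    case (elim h)
    then have h: "0 < h" "h \<le> 1" and hd: "real CARD('d) * h < \<delta>" by (auto simp: field_simps)
    define avg where "avg k = (\<integral>x. indicator (cube h (a h) k) x * f x \<partial>lborel)
                              / measure lborel (cube h (a h) k)" for k
    have cell: "\<bar>avg k - f (ctr h k)\<bar> \<le> e" if k: "k \<in> cl h" for k
      unfolding avg_def
    proof (rule cube_average_close[OF h(1) f])
      fix x assume x: "x \<in> cube h (a h) k"
      have "dist (ctr h k) x < \<delta>"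
        using norm_diff_cube_le[OF center_in_cube[OF h(1)] x] hd by (simp add: dist_norm)
      then show "\<bar>f x - f (ctr h k)\<bar> \<le> e"
        using \<delta> center_in_cell_ball[OF h k] cube_subset_cell_ball[OF h k] x
        by (force simp: dist_real_def)
    qed
    have "riemann_sum h f - (\<integral>x. f x \<partial>rhohat \<Omega> h (a h) (\<rho>h h))
        = (\<Sum>k\<in>cl h. \<rho>h h k * (f (ctr h k) - avg k))"
      unfolding integral_rhohat[OF h(1) f] riemann_sum_def avg_def
      by (simp add: sum_subtractf right_diff_distrib)
    also have "\<bar>\<dots>\<bar> \<le> (\<Sum>k\<in>cl h. \<rho>h h k * \<bar>f (ctr h k) - avg k\<bar>)"
      using \<rho>h_nonneg[OF h(1)] by (auto simp: abs_mult intro: order.trans[OF sum_abs])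
    also have "\<dots> \<le> (\<Sum>k\<in>cl h. \<rho>h h k * e)"
      using cell \<rho>h_nonneg[OF h(1)] by (intro sum_mono mult_left_mono) (auto simp: abs_minus_commute)
    also have "\<dots> = e" using \<rho>h_sum[OF h(1)] by (simp add: sum_distrib_right[symmetric])
    finally show ?case by simp
  qed
qed

text \<open>The weak convergence hypothesis only covers bounded test functions; a continuous \<open>f\<close> is
  replaced by its truncation at the bound of \<open>f\<close> on \<open>cell_ball\<close>, which changes neither side.\<close>
lemma riemann_sum_tendsto:
  fixes f :: "real^'d \<Rightarrow> real"
  assumes f: "continuous_on UNIV f"
  shows "((\<lambda>h. riemann_sum h f) \<longlongrightarrow> (\<integral>x. f x \<partial>\<mu>)) (at_right 0)"
proof -
  obtain B where B: "\<And>x. x \<in> cell_ball \<Longrightarrow> \<bar>f x\<bar> \<le> B"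
    using continuous_bounded_on_cell_ball[OF f] by (metis real_norm_def)
  define f' where "f' x = max (-B) (min B (f x))" for x
  have f': "continuous_on UNIV f'" unfolding f'_def by (intro continuous_intros f)
  have "bounded (range f')"
    unfolding bounded_iff f'_def by (intro exI[of _ "\<bar>B\<bar>"]) auto
  then have weak': "((\<lambda>h. \<integral>x. f' x \<partial>rhohat \<Omega> h (a h) (\<rho>h h)) \<longlongrightarrow> (\<integral>x. f' x \<partial>\<mu>)) (at_right 0)"
    by (rule weak[OF f'])
  have f'_eq: "f' x = f x" if "x \<in> cell_ball" for x using B[OF that] by (auto simp: f'_def)
  have "(\<integral>x. f' x \<partial>\<mu>) = (\<integral>x. f x \<partial>\<mu>)"
    by (rule integral_cong_AE[OF continuous_imp_borel_measurable[OF f'] continuous_imp_borel_measurable[OF f]])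
       (use AE_in_\<Omega> in \<open>eventually_elim, use f'_eq \<Omega>_subset_cell_ball in auto\<close>)
  moreover have "riemann_sum h f' = riemann_sum h f" if "0 < h" "h < 1" for h
    using that f'_eq center_in_cell_ball unfolding riemann_sum_def by (auto intro!: sum.cong)
  then have "eventually (\<lambda>h. riemann_sum h f' = riemann_sum h f) (at_right 0)"
    unfolding eventually_at_right_field by (intro exI[of _ 1]) auto
  ultimately show ?thesis
    using tendsto_add[OF riemann_sum_rhohat_diff_tendsto[OF f'] weak']
    by (auto elim: Lim_transform_eventually)
qed

lemma riemann_sum_tendsto_vec:
  fixes f :: "real^'d \<Rightarrow> real^'e"
  assumes f: "continuous_on UNIV f"
  shows "((\<lambda>h. riemann_sum h f) \<longlongrightarrow> (\<integral>x. f x \<partial>\<mu>)) (at_right 0)"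
proof (rule vec_tendstoI)
  fix i
  have fi: "continuous_on UNIV (\<lambda>x. f x $ i)" by (rule continuous_on_component[OF f])
  have "riemann_sum h f $ i = riemann_sum h (\<lambda>x. f x $ i)" for h
    by (simp add: riemann_sum_def)
  moreover have "(\<integral>x. f x \<partial>\<mu>) $ i = (\<integral>x. f x $ i \<partial>\<mu>)"
    using continuous_imp_integrable[OF f] by (simp add: cart_eq_inner_axis)
  ultimately show "((\<lambda>h. riemann_sum h f $ i) \<longlongrightarrow> (\<integral>x. f x \<partial>\<mu>) $ i) (at_right 0)"
    using riemann_sum_tendsto[OF fi] by simp
qed

section \<open>Mass of the boundary cells\<close>

definition boundary_cells :: "real \<Rightarrow> (int^'d) set" where
  "boundary_cells h = {k \<in> cl h. \<not> grid_nbrs k \<subseteq> cl h}"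

definition boundary_layer :: "real \<Rightarrow> real^'d \<Rightarrow> real" where
  "boundary_layer \<delta> x = max 0 (1 - infdist x (- \<Omega>) / \<delta>)"

lemma continuous_on_boundary_layer: "continuous_on UNIV (boundary_layer \<delta>)"
  unfolding boundary_layer_def by (cases "\<delta> = 0") (auto intro!: continuous_intros)

lemma boundary_layer_bounds: "0 \<le> boundary_layer \<delta> x" "\<delta> > 0 \<Longrightarrow> boundary_layer \<delta> x \<le> 1"
  unfolding boundary_layer_def by (auto simp: infdist_nonneg)

text \<open>Dominated convergence: the layers vanish pointwise on the open set \<open>\<Omega>\<close>, which carries \<open>\<mu>\<close>.\<close>
lemma integral_boundary_layer_small:
  assumes e: "e > 0"
  shows "\<exists>\<delta>>0. (\<integral>x. boundary_layer \<delta> x \<partial>\<mu>) \<le> e"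
proof -
  let ?s = "\<lambda>n. boundary_layer (1 / (real n + 1))"
  have "- \<Omega> \<noteq> {}"
  proof
    assume "- \<Omega> = {}"
    then have "\<Omega> = UNIV" by auto
    then show False using \<Omega>_bounded not_bounded_UNIV by simp
  qed
  have "(\<lambda>n. \<integral>x. ?s n x \<partial>\<mu>) \<longlonglongrightarrow> (\<integral>x. 0 \<partial>\<mu>)"
  proof (rule integral_dominated_convergence[where w="\<lambda>x. 1"])
    show "AE x in \<mu>. norm (?s n x) \<le> 1" for n
      using boundary_layer_bounds[of "1 / (real n + 1)"] by (intro AE_I2) auto
    show "AE x in \<mu>. (\<lambda>n. ?s n x) \<longlonglongrightarrow> 0"
      using AE_in_\<Omega>
    proof eventually_elim
      fix x assume "x \<in> \<Omega>"
      then have "infdist x (- \<Omega>) > 0"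
        using \<Omega>_open \<open>- \<Omega> \<noteq> {}\<close> by (intro infdist_pos_not_in_closed) auto
      then obtain N :: nat where N: "1 / (real N + 1) < infdist x (- \<Omega>)"
        using reals_Archimedean by (metis add.commute inverse_eq_divide of_nat_Suc)
      have "?s n x = 0" if "N \<le> n" for n
      proof -
        have "1 / (real n + 1) \<le> 1 / (real N + 1)" using that by (simp add: frac_le)
        with N have "1 / (real n + 1) < infdist x (- \<Omega>)" by linarith
        then have "1 \<le> infdist x (- \<Omega>) / (1 / (real n + 1))" by (simp add: field_simps)
        then show ?thesis by (simp add: boundary_layer_def)
      qed
      then show "(\<lambda>n. ?s n x) \<longlonglongrightarrow> 0"
        by (intro tendsto_eventually) (auto simp: eventually_sequentially)
    qed
  qed (auto intro: continuous_imp_borel_measurable continuous_on_boundary_layer)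
  then obtain N where "\<bar>\<integral>x. ?s N x \<partial>\<mu>\<bar> < e"
    using e by (auto dest!: LIMSEQ_D[where r=e])
  then show ?thesis by (intro exI[of _ "1 / (real N + 1)"]) auto
qed

text \<open>A boundary cell has a neighbour whose centre lies outside \<open>\<Omega>\<close>, so its own centre is
  within \<open>h\<close> of \<open>- \<Omega>\<close>, where the layer of width \<open>\<delta> \<ge> 2 h\<close> is at least \<open>1/2\<close>.\<close>
lemma boundary_mass_tendsto: "((\<lambda>h. \<Sum>k\<in>boundary_cells h. \<rho>h h k) \<longlongrightarrow> 0) (at_right 0)"
proof (rule tendsto_zero_if_eventually_le)
  fix e :: real assume e: "e > 0"
  obtain \<delta> where \<delta>: "\<delta> > 0" "(\<integral>x. boundary_layer \<delta> x \<partial>\<mu>) \<le> e/4"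
    using integral_boundary_layer_small[of "e/4"] e by auto
  have "eventually (\<lambda>h. dist (riemann_sum h (boundary_layer \<delta>)) (\<integral>x. boundary_layer \<delta> x \<partial>\<mu>) < e/4) (at_right 0)"
    using tendstoD[OF riemann_sum_tendsto[OF continuous_on_boundary_layer], of "e/4"] e by simp
  moreover have "eventually (\<lambda>h. 0 < h \<and> h < \<delta>/2) (at_right 0)"
    unfolding eventually_at_right_field using \<delta>(1) by (intro exI[of _ "\<delta>/2"]) auto
  ultimately show "eventually (\<lambda>h. norm (\<Sum>k\<in>boundary_cells h. \<rho>h h k) \<le> e) (at_right 0)"
  proof eventually_elim
    case (elim h)
    then have h: "0 < h" "h < \<delta>/2" by auto
    have sub: "boundary_cells h \<subseteq> cl h" by (auto simp: boundary_cells_def)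
    have nonneg: "0 \<le> \<rho>h h k" if "k \<in> cl h" for k using \<rho>h_nonneg[OF h(1) that] .
    have half: "1 \<le> 2 * boundary_layer \<delta> (ctr h k)" if k: "k \<in> boundary_cells h" for k
    proof -
      obtain l where l: "l \<in> grid_nbrs k" "l \<notin> cl h" using k by (auto simp: boundary_cells_def)
      then have "ctr h l \<in> - \<Omega>"
        using center_in_interior_cube[OF h(1)] by (auto simp: cells_def)
      then have "infdist (ctr h k) (- \<Omega>) \<le> h"
        using infdist_le dist_center_nbr[OF l(1) h(1)] by metis
      then show ?thesis using h \<delta>(1) by (simp add: boundary_layer_def field_simps)
    qed
    have "(\<Sum>k\<in>boundary_cells h. \<rho>h h k) \<le> (\<Sum>k\<in>boundary_cells h. 2 * (\<rho>h h k * boundary_layer \<delta> (ctr h k)))"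
    proof (rule sum_mono)
      fix k assume k: "k \<in> boundary_cells h"
      with sub have "\<rho>h h k * 1 \<le> \<rho>h h k * (2 * boundary_layer \<delta> (ctr h k))"
        by (intro mult_left_mono[OF half[OF k]] nonneg) auto
      then show "\<rho>h h k \<le> 2 * (\<rho>h h k * boundary_layer \<delta> (ctr h k))" by simp
    qed
    also have "\<dots> \<le> (\<Sum>k\<in>cl h. 2 * (\<rho>h h k * boundary_layer \<delta> (ctr h k)))"
      by (rule sum_mono2[OF finite_cl[OF h(1)] sub]) (use nonneg boundary_layer_bounds(1) in auto)
    also have "\<dots> = 2 * riemann_sum h (boundary_layer \<delta>)"
      by (simp add: riemann_sum_def sum_distrib_left)
    also have "\<dots> \<le> e" using elim(1) \<delta>(2) unfolding dist_real_def abs_less_iff by linarith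
    finally show ?case using sub nonneg by (simp add: sum_nonneg subset_eq)
  qed
qed

section \<open>Limit of the upwind dissipation\<close>

lemma Rstar_eq_edge_sum:
  assumes h: "h > 0"
  shows "Rstar \<Omega> h (a h) (\<rho>h h) \<xi>
    = (\<Sum>(k,l)\<in>E h. \<rho>h h k * ((posp (\<xi> k l / h))\<^sup>2 + (posp (- (\<xi> l k / h)))\<^sup>2) / 4)"
proof -
  have "Rstar \<Omega> h (a h) (\<rho>h h) \<xi>
      = (\<Sum>(k,l)\<in>E h. \<rho>h h k * (posp (\<xi> k l/h))\<^sup>2 / 4) + (\<Sum>(k,l)\<in>E h. \<rho>h h l * (posp (- (\<xi> k l/h)))\<^sup>2 / 4)"
    unfolding Rstar_def sum.distrib[symmetric]
    by (rule sum.cong[OF refl]) (auto simp: edges_eq_Sigma Rstar_summand_eq[OF h] add_divide_distrib)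
  also have "(\<Sum>(k,l)\<in>E h. \<rho>h h l * (posp (- (\<xi> k l/h)))\<^sup>2 / 4)
           = (\<Sum>(k,l)\<in>E h. \<rho>h h k * (posp (- (\<xi> l k/h)))\<^sup>2 / 4)"
    by (rule sum_edges_swap)
  finally show ?thesis
    by (simp add: sum.distrib[symmetric] case_prod_unfold add_divide_distrib distrib_left)
qed

lemma abs_edge_sum_le:
  assumes h: "h > 0" and "c \<ge> 0" and bound: "\<And>k l. (k,l) \<in> E h \<Longrightarrow> \<bar>t k l\<bar> \<le> c"
  shows "\<bar>\<Sum>(k,l)\<in>E h. \<rho>h h k * t k l\<bar> \<le> 2 * real CARD('d) * c"
proof -
  have nonneg: "0 \<le> \<rho>h h k" if "k \<in> cl h" for k using \<rho>h_nonneg[OF h that] .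
  have "\<bar>\<Sum>(k,l)\<in>E h. \<rho>h h k * t k l\<bar> \<le> (\<Sum>(k,l)\<in>E h. \<bar>\<rho>h h k * t k l\<bar>)"
    by (rule order.trans[OF sum_abs]) (simp add: case_prod_unfold)
  also have "\<dots> \<le> (\<Sum>(k,l)\<in>E h. \<rho>h h k * c)"
    using nonneg bound by (intro sum_mono) (auto simp: edges_eq_Sigma abs_mult intro!: mult_left_mono)
  also have "\<dots> = (\<Sum>k\<in>cl h. \<Sum>l\<in>grid_nbrs k \<inter> cl h. \<rho>h h k * c)"
    by (rule sum_edges[OF h])
  also have "\<dots> \<le> (\<Sum>k\<in>cl h. \<rho>h h k * (2 * real CARD('d) * c))"
  proof (rule sum_mono)
    fix k assume k: "k \<in> cl h"
    have "card (grid_nbrs k \<inter> cl h) \<le> 2 * CARD('d)"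
      using card_mono[OF finite_grid_nbrs, of "grid_nbrs k \<inter> cl h" k] card_grid_nbrs[of k] by simp
    then have "real (card (grid_nbrs k \<inter> cl h)) * c \<le> 2 * real CARD('d) * c"
      using \<open>c \<ge> 0\<close> by (intro mult_right_mono) auto
    then show "(\<Sum>l\<in>grid_nbrs k \<inter> cl h. \<rho>h h k * c) \<le> \<rho>h h k * (2 * real CARD('d) * c)"
      using nonneg[OF k] by (simp add: mult_left_mono mult.left_commute)
  qed
  also have "\<dots> = 2 * real CARD('d) * c" using \<rho>h_sum[OF h] by (simp add: sum_distrib_right[symmetric])
  finally show ?thesis .
qed

definition upwind_sum :: "real \<Rightarrow> (real^'d \<Rightarrow> real^'d) \<Rightarrow> real" where
  "upwind_sum h G = (\<Sum>(k,l)\<in>E h. \<rho>h h k * (posp (G (ctr h k) \<bullet> of_int_vec (l - k)))\<^sup>2)"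

lemma Rstar_minus_upwind_sum_eq:
  assumes "h > 0"
  shows "Rstar \<Omega> h (a h) (\<rho>h h) \<xi> - upwind_sum h G / 2
    = (\<Sum>(k,l)\<in>E h. \<rho>h h k * (((posp (\<xi> k l / h))\<^sup>2 + (posp (- (\<xi> l k / h)))\<^sup>2) / 4
                              - (posp (G (ctr h k) \<bullet> of_int_vec (l - k)))\<^sup>2 / 2))"
  unfolding Rstar_eq_edge_sum[OF assms] upwind_sum_def
  by (simp add: case_prod_unfold sum_subtractf sum_divide_distrib right_diff_distrib)

lemma upwind_edge_close:
  assumes h: "0 < h" "h \<le> 1" and kl: "(k,l) \<in> E h" and "\<eta> \<le> 1"
    and M: "\<And>x. x \<in> cell_ball \<Longrightarrow> norm (G x) \<le> M"
    and osc: "dist (G (ctr h l)) (G (ctr h k)) \<le> \<eta>/2"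
    and approx: "\<forall>(k,l)\<in>E h. \<bar>\<xi> k l - G (ctr h k) \<bullet> (ctr h l - ctr h k)\<bar> \<le> \<eta>/2 * h"
  shows "\<bar>((posp (\<xi> k l / h))\<^sup>2 + (posp (- (\<xi> l k / h)))\<^sup>2) / 4
           - (posp (G (ctr h k) \<bullet> of_int_vec (l - k)))\<^sup>2 / 2\<bar> \<le> \<eta> * (2 * M + 1) / 2"
proof (rule upwind_pair_close[OF _ _ _ _ \<open>\<eta> \<le> 1\<close>])
  define g where "g k l = G (ctr h k) \<bullet> of_int_vec (l - k)" for k l
  have lk: "(l,k) \<in> E h" and nbr: "l \<in> grid_nbrs k" and "k \<in> cl h"
    using kl grid_nbrs_sym by (auto simp: edges_eq_Sigma)
  have unit: "norm (of_int_vec (l - k)) = 1" by (rule norm_of_int_vec_nbr[OF nbr])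
  show "\<bar>\<xi> k l / h - g k l\<bar> \<le> \<eta>/2" "\<bar>\<xi> l k / h - g l k\<bar> \<le> \<eta>/2"
    unfolding g_def using approx kl lk by (blast intro: div_mesh_close[OF _ h(1)])+
  have "g k l + g l k = (G (ctr h k) - G (ctr h l)) \<bullet> of_int_vec (l - k)"
    using of_int_vec_uminus[of "l - k"] by (simp add: g_def inner_diff_left)
  then show "\<bar>g k l + g l k\<bar> \<le> \<eta>/2"
    using Cauchy_Schwarz_ineq2[of "G (ctr h k) - G (ctr h l)" "of_int_vec (l - k)"] unit osc
    by (simp add: dist_norm norm_minus_commute)
  show "\<bar>g k l\<bar> \<le> M"
    using Cauchy_Schwarz_ineq2[of "G (ctr h k)" "of_int_vec (l - k)"] unit
      M[OF center_in_cell_ball[OF h \<open>k \<in> cl h\<close>]]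
    by (simp add: g_def)
qed

lemma Rstar_upwind_sum_diff_tendsto:
  fixes G :: "real^'d \<Rightarrow> real^'d" and \<xi>h :: "real \<Rightarrow> int^'d \<Rightarrow> int^'d \<Rightarrow> real"
  assumes G: "continuous_on UNIV G"
    and approx: "\<And>\<epsilon>. \<epsilon> > 0 \<Longrightarrow> eventually (\<lambda>h. \<forall>(k,l)\<in>E h.
               \<bar>\<xi>h h k l - G (ctr h k) \<bullet> (ctr h l - ctr h k)\<bar> \<le> \<epsilon> * h) (at_right 0)"
  shows "((\<lambda>h. Rstar \<Omega> h (a h) (\<rho>h h) (\<xi>h h) - upwind_sum h G / 2) \<longlongrightarrow> 0) (at_right 0)"
proof (rule tendsto_zero_if_eventually_le)
  fix \<epsilon> :: real assume \<epsilon>: "\<epsilon> > 0"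
  obtain M where "M \<ge> 0" and M: "\<And>x. x \<in> cell_ball \<Longrightarrow> norm (G x) \<le> M"
    using continuous_bounded_on_cell_ball[OF G] by blast
  define \<eta> where "\<eta> = min 1 (\<epsilon> / (real CARD('d) * (2 * M + 1)))"
  have "\<eta> > 0" "\<eta> \<le> 1" using \<epsilon> \<open>M \<ge> 0\<close> by (auto simp: \<eta>_def)
  have "\<eta> \<le> \<epsilon> / (real CARD('d) * (2 * M + 1))" by (simp add: \<eta>_def)
  then have "\<eta> * (real CARD('d) * (2 * M + 1)) \<le> \<epsilon>"
    using \<open>M \<ge> 0\<close> by (simp add: pos_le_divide_eq)
  then have \<eta>_\<epsilon>: "2 * real CARD('d) * (\<eta> * (2 * M + 1) / 2) \<le> \<epsilon>"
    by (simp add: algebra_simps)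
  have "uniformly_continuous_on cell_ball G"
    by (rule compact_uniformly_continuous[OF continuous_on_subset[OF G]]) auto
  then obtain \<delta> where "\<delta> > 0"
    and \<delta>: "\<forall>x\<in>cell_ball. \<forall>y\<in>cell_ball. dist y x < \<delta> \<longrightarrow> dist (G y) (G x) < \<eta>/2"
    unfolding uniformly_continuous_on_def using \<open>\<eta> > 0\<close> half_gt_zero by blast
  have "eventually (\<lambda>h. \<forall>(k,l)\<in>E h. \<bar>\<xi>h h k l - G (ctr h k) \<bullet> (ctr h l - ctr h k)\<bar> \<le> \<eta>/2 * h)
          (at_right 0)"
    using \<open>\<eta> > 0\<close> by (intro approx) simp
  moreover have "eventually (\<lambda>h. 0 < h \<and> h < min 1 \<delta>) (at_right 0)"
    unfolding eventually_at_right_field using \<open>\<delta> > 0\<close> by (intro exI[of _ "min 1 \<delta>"]) auto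
  ultimately
  show "eventually (\<lambda>h. norm (Rstar \<Omega> h (a h) (\<rho>h h) (\<xi>h h) - upwind_sum h G / 2) \<le> \<epsilon>) (at_right 0)"
  proof eventually_elim
    case (elim h)
    then have h: "0 < h" "h \<le> 1" "h < \<delta>" by auto
    have "dist (G (ctr h l)) (G (ctr h k)) \<le> \<eta>/2" if "(k,l) \<in> E h" for k l
    proof -
      have "l \<in> grid_nbrs k" "k \<in> cl h" "l \<in> cl h" using that by (auto simp: edges_eq_Sigma)
      then have "ctr h k \<in> cell_ball" "ctr h l \<in> cell_ball" "dist (ctr h l) (ctr h k) < \<delta>"
        using center_in_cell_ball[OF h(1,2)] dist_center_nbr[of l k h "a h"] h
        by (simp_all add: dist_commute)
      then have "dist (G (ctr h l)) (G (ctr h k)) < \<eta>/2" using \<delta> by blast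
      then show ?thesis by simp
    qed
    then have "\<bar>Rstar \<Omega> h (a h) (\<rho>h h) (\<xi>h h) - upwind_sum h G / 2\<bar> \<le> 2 * real CARD('d) * (\<eta> * (2 * M + 1) / 2)"
      unfolding Rstar_minus_upwind_sum_eq[OF h(1)] using \<open>\<eta> > 0\<close> \<open>M \<ge> 0\<close> elim(1)
      by (intro abs_edge_sum_le[OF h(1)] upwind_edge_close[OF h(1,2) _ \<open>\<eta> \<le> 1\<close> M]) auto
    with \<eta>_\<epsilon> show ?case by simp
  qed
qed

text \<open>By \<open>sum_grid_nbrs_posp_sq\<close> the upwind sum misses exactly the terms of neighbours outside the
  grid, so the gap to the Riemann sum of \<open>|G|\<^sup>2\<close> is carried by the boundary cells.\<close>
lemma upwind_sum_gap:
  assumes h: "0 < h" "h \<le> 1" and M: "\<And>x. x \<in> cell_ball \<Longrightarrow> norm (G x) \<le> M"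
  shows "0 \<le> riemann_sum h (\<lambda>x. (norm (G x))\<^sup>2) - upwind_sum h G"
    and "riemann_sum h (\<lambda>x. (norm (G x))\<^sup>2) - upwind_sum h G \<le> (\<Sum>k\<in>boundary_cells h. \<rho>h h k) * M\<^sup>2"
proof -
  define missing where "missing k = (norm (G (ctr h k)))\<^sup>2
      - (\<Sum>l\<in>grid_nbrs k \<inter> cl h. (posp (G (ctr h k) \<bullet> of_int_vec (l - k)))\<^sup>2)" for k
  have nonneg: "0 \<le> \<rho>h h k" if "k \<in> cl h" for k using \<rho>h_nonneg[OF h(1) that] .
  have gap: "riemann_sum h (\<lambda>x. (norm (G x))\<^sup>2) - upwind_sum h G = (\<Sum>k\<in>cl h. \<rho>h h k * missing k)"
    by (simp add: riemann_sum_def upwind_sum_def sum_edges[OF h(1)] missing_def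
                  sum_distrib_left sum_subtractf right_diff_distrib)
  have missing_nonneg: "missing k \<ge> 0" for k
  proof -
    have "(\<Sum>l\<in>grid_nbrs k \<inter> cl h. (posp (G (ctr h k) \<bullet> of_int_vec (l - k)))\<^sup>2)
        \<le> (\<Sum>l\<in>grid_nbrs k. (posp (G (ctr h k) \<bullet> of_int_vec (l - k)))\<^sup>2)"
      by (rule sum_mono2[OF finite_grid_nbrs]) auto
    then show ?thesis by (simp add: missing_def sum_grid_nbrs_posp_sq)
  qed
  have missing_le: "missing k \<le> M\<^sup>2" if "k \<in> cl h" for k
  proof -
    have "(norm (G (ctr h k)))\<^sup>2 \<le> M\<^sup>2"
      using M[OF center_in_cell_ball[OF h that]] by (simp add: power_mono)
    moreover have "0 \<le> (\<Sum>l\<in>grid_nbrs k \<inter> cl h. (posp (G (ctr h k) \<bullet> of_int_vec (l - k)))\<^sup>2)"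
      by (rule sum_nonneg) simp
    ultimately show ?thesis by (simp add: missing_def)
  qed
  have "(\<Sum>k\<in>cl h. \<rho>h h k * missing k) = (\<Sum>k\<in>boundary_cells h. \<rho>h h k * missing k)"
    by (rule sum.mono_neutral_right[OF finite_cl[OF h(1)]])
       (auto simp: boundary_cells_def missing_def Int_absorb2 sum_grid_nbrs_posp_sq)
  then have gap_boundary: "riemann_sum h (\<lambda>x. (norm (G x))\<^sup>2) - upwind_sum h G
                         = (\<Sum>k\<in>boundary_cells h. \<rho>h h k * missing k)"
    by (simp add: gap)
  have "k \<in> boundary_cells h \<Longrightarrow> k \<in> cl h" for k by (simp add: boundary_cells_def)
  then show "0 \<le> riemann_sum h (\<lambda>x. (norm (G x))\<^sup>2) - upwind_sum h G"
    and "riemann_sum h (\<lambda>x. (norm (G x))\<^sup>2) - upwind_sum h G \<le> (\<Sum>k\<in>boundary_cells h. \<rho>h h k) * M\<^sup>2"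
    unfolding gap_boundary sum_distrib_right using nonneg missing_nonneg missing_le
    by (auto intro!: sum_nonneg sum_mono mult_left_mono)
qed

lemma riemann_sum_upwind_sum_diff_tendsto:
  assumes G: "continuous_on UNIV G"
  shows "((\<lambda>h. riemann_sum h (\<lambda>x. (norm (G x))\<^sup>2) - upwind_sum h G) \<longlongrightarrow> 0) (at_right 0)"
proof -
  obtain M where M: "\<And>x. x \<in> cell_ball \<Longrightarrow> norm (G x) \<le> M"
    using continuous_bounded_on_cell_ball[OF G] by blast
  have "norm (riemann_sum h (\<lambda>x. (norm (G x))\<^sup>2) - upwind_sum h G)
        \<le> norm (\<Sum>k\<in>boundary_cells h. \<rho>h h k) * M\<^sup>2" if h: "0 < h" "h < 1" for h
  proof -
    have "0 \<le> (\<Sum>k\<in>boundary_cells h. \<rho>h h k)"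
      using \<rho>h_nonneg[OF h(1)] by (intro sum_nonneg) (auto simp: boundary_cells_def)
    then show ?thesis using upwind_sum_gap[OF h(1) _ M] h by simp
  qed
  then have "eventually (\<lambda>h. norm (riemann_sum h (\<lambda>x. (norm (G x))\<^sup>2) - upwind_sum h G)
                        \<le> norm (\<Sum>k\<in>boundary_cells h. \<rho>h h k) * M\<^sup>2) (at_right 0)"
    unfolding eventually_at_right_field by (intro exI[of _ 1]) auto
  then show ?thesis by (rule tendsto_0_le[OF boundary_mass_tendsto])
qed

lemma set_integral_\<Omega>:
  assumes "continuous_on UNIV f"
  shows "(LINT x:\<Omega>|\<mu>. f x) = (\<integral>x. f x \<partial>\<mu>)"
proof -
  have "\<Omega> \<in> sets \<mu>" using sets_\<mu> \<Omega>_open by simp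
  then show ?thesis
    unfolding set_lebesgue_integral_def
    using AE_in_\<Omega> continuous_imp_borel_measurable[OF assms]
    by (intro integral_cong_AE) (auto elim: eventually_mono)
qed

lemma Rstar_tendsto:
  fixes G :: "real^'d \<Rightarrow> real^'d" and \<xi>h :: "real \<Rightarrow> int^'d \<Rightarrow> int^'d \<Rightarrow> real"
  assumes G: "continuous_on UNIV G"
    and approx: "\<And>\<epsilon>. \<epsilon> > 0 \<Longrightarrow> eventually (\<lambda>h. \<forall>(k,l)\<in>E h.
               \<bar>\<xi>h h k l - G (ctr h k) \<bullet> (ctr h l - ctr h k)\<bar> \<le> \<epsilon> * h) (at_right 0)"
  shows "((\<lambda>h. Rstar \<Omega> h (a h) (\<rho>h h) (\<xi>h h)) \<longlongrightarrow> (1/2) * (LINT x:\<Omega>|\<mu>. (norm (G x))\<^sup>2)) (at_right 0)"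
proof -
  have N: "continuous_on UNIV (\<lambda>x. (norm (G x))\<^sup>2)" by (intro continuous_intros G)
  let ?R = "\<lambda>h. Rstar \<Omega> h (a h) (\<rho>h h) (\<xi>h h)" and ?N = "\<lambda>h. riemann_sum h (\<lambda>x. (norm (G x))\<^sup>2)"
  have R: "?R h = (?R h - upwind_sum h G / 2) - (?N h - upwind_sum h G) / 2 + ?N h / 2" for h
    by (simp add: field_simps)
  have "((\<lambda>h. (?R h - upwind_sum h G / 2) - (?N h - upwind_sum h G) / 2 + ?N h / 2)
          \<longlongrightarrow> 0 - 0 / 2 + (\<integral>x. (norm (G x))\<^sup>2 \<partial>\<mu>) / 2) (at_right 0)"
    by (intro tendsto_intros Rstar_upwind_sum_diff_tendsto riemann_sum_upwind_sum_diff_tendsto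
              riemann_sum_tendsto G N approx) auto
  then show ?thesis by (subst R) (simp add: set_integral_\<Omega>[OF N])
qed

section \<open>Convolution with the limit measure\<close>

abbreviation "diff_ball \<equiv> cball (0::real^'d) (2 * (\<Omega>_radius + real CARD('d)))"

lemma diff_in_diff_ball: "x \<in> cell_ball \<Longrightarrow> y \<in> cell_ball \<Longrightarrow> x - y \<in> diff_ball"
  using norm_triangle_ineq4[of x y] by simp

lemma riemann_sum_inner_left: "riemann_sum h (\<lambda>y. f y \<bullet> u) = riemann_sum h f \<bullet> u"
  by (simp add: riemann_sum_def inner_sum_left)

lemma continuous_on_convolution:
  fixes g :: "real^'d \<Rightarrow> 'b::{banach, second_countable_topology}"
  assumes g: "continuous_on UNIV g"
  shows "continuous_on UNIV (\<lambda>x. \<integral>y. g (x - y) \<partial>\<mu>)"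
proof (rule continuous_at_imp_continuous_on, intro ballI)
  fix x0 :: "real^'d"
  let ?K = "cball (0::real^'d) (norm x0 + 1 + (\<Omega>_radius + real CARD('d)))"
  show "isCont (\<lambda>x. \<integral>y. g (x - y) \<partial>\<mu>) x0"
    unfolding continuous_at_eps_delta
  proof (intro allI impI)
    fix e :: real assume e: "e > 0"
    have "uniformly_continuous_on ?K g"
      by (rule compact_uniformly_continuous[OF continuous_on_subset[OF g]]) auto
    then obtain \<delta> where "\<delta> > 0" and \<delta>: "\<forall>x\<in>?K. \<forall>y\<in>?K. dist y x < \<delta> \<longrightarrow> dist (g y) (g x) < e/2"
      unfolding uniformly_continuous_on_def using e half_gt_zero by blast
    have "dist (\<integral>y. g (x - y) \<partial>\<mu>) (\<integral>y. g (x0 - y) \<partial>\<mu>) < e" if x: "dist x x0 < min 1 \<delta>" for x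
    proof -
      have "norm ((\<integral>y. g (x - y) \<partial>\<mu>) - (\<integral>y. g (x0 - y) \<partial>\<mu>)) \<le> e/2"
      proof (rule norm_integral_diff_le[OF continuous_on_translate[OF g] continuous_on_translate[OF g]])
        fix y assume "y \<in> \<Omega>"
        then have "norm y \<le> \<Omega>_radius + real CARD('d)" using \<Omega>_subset_cell_ball by auto
        moreover have "norm x \<le> norm x0 + 1" using x norm_triangle_sub[of x x0] by (simp add: dist_norm)
        ultimately have "x - y \<in> ?K" "x0 - y \<in> ?K"
          using norm_triangle_ineq4[of x y] norm_triangle_ineq4[of x0 y] by simp_all
        moreover have "dist (x - y) (x0 - y) < \<delta>" using x by (simp add: dist_norm)
        ultimately have "dist (g (x - y)) (g (x0 - y)) < e/2" using \<delta> by blast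
        then show "norm (g (x - y) - g (x0 - y)) \<le> e/2" by (simp add: dist_norm)
      qed
      then show ?thesis using e by (simp add: dist_norm)
    qed
    then show "\<exists>d>0. \<forall>x. dist x x0 < d \<longrightarrow> dist (\<integral>y. g (x - y) \<partial>\<mu>) (\<integral>y. g (x0 - y) \<partial>\<mu>) < e"
      using \<open>\<delta> > 0\<close> by (intro exI[of _ "min 1 \<delta>"]) auto
  qed
qed

lemma translates_equicontinuous:
  fixes g :: "real^'d \<Rightarrow> 'b::{banach, second_countable_topology}"
  assumes g: "continuous_on UNIV g" and e: "e > 0"
  obtains \<delta> where "\<delta> > 0"
    and "\<And>x z h. x \<in> cell_ball \<Longrightarrow> z \<in> cell_ball \<Longrightarrow> dist z x < \<delta> \<Longrightarrow> 0 < h \<Longrightarrow> h \<le> 1 \<Longrightarrow>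
           norm (riemann_sum h (\<lambda>y. g (x - y)) - riemann_sum h (\<lambda>y. g (z - y))) \<le> e"
    and "\<And>x z. x \<in> cell_ball \<Longrightarrow> z \<in> cell_ball \<Longrightarrow> dist z x < \<delta> \<Longrightarrow>
           norm ((\<integral>y. g (z - y) \<partial>\<mu>) - (\<integral>y. g (x - y) \<partial>\<mu>)) \<le> e"
proof -
  have "uniformly_continuous_on diff_ball g"
    by (rule compact_uniformly_continuous[OF continuous_on_subset[OF g]]) auto
  then obtain \<delta> where "\<delta> > 0" and \<delta>: "\<forall>x\<in>diff_ball. \<forall>y\<in>diff_ball. dist y x < \<delta> \<longrightarrow> dist (g y) (g x) < e"
    unfolding uniformly_continuous_on_def using e by blast
  have close: "norm (g (x - y) - g (z - y)) \<le> e"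
    if "x \<in> cell_ball" "z \<in> cell_ball" "y \<in> cell_ball" "dist z x < \<delta>" for x y z
  proof -
    have "dist (x - y) (z - y) < \<delta>" using that(4) by (simp add: dist_norm norm_minus_commute)
    then have "dist (g (x - y)) (g (z - y)) < e"
      using \<delta> diff_in_diff_ball[OF that(1,3)] diff_in_diff_ball[OF that(2,3)] by blast
    then show ?thesis by (simp add: dist_norm)
  qed
  show ?thesis
  proof (rule that[OF \<open>\<delta> > 0\<close>])
    fix x z and h :: real assume "x \<in> cell_ball" "z \<in> cell_ball" "dist z x < \<delta>" "0 < h" "h \<le> 1"
    then show "norm (riemann_sum h (\<lambda>y. g (x - y)) - riemann_sum h (\<lambda>y. g (z - y))) \<le> e"
      using close by (subst riemann_sum_diff[symmetric]) (intro norm_riemann_sum_le; simp)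
  next
    fix x z assume "x \<in> cell_ball" "z \<in> cell_ball" "dist z x < \<delta>"
    then show "norm ((\<integral>y. g (z - y) \<partial>\<mu>) - (\<integral>y. g (x - y) \<partial>\<mu>)) \<le> e"
      using close \<Omega>_subset_cell_ball
      by (intro norm_integral_diff_le continuous_on_translate[OF g]) (auto simp: norm_minus_commute)
  qed
qed

text \<open>Uniformity in \<open>x\<close> comes from a finite net of \<open>cell_ball\<close> and the equicontinuity of the
  translates \<open>g (x - _)\<close>.\<close>
lemma riemann_sum_convolution_uniform:
  fixes g :: "real^'d \<Rightarrow> real^'e"
  assumes g: "continuous_on UNIV g" and e: "e > 0"
  shows "eventually (\<lambda>h. \<forall>x\<in>cell_ball.
           norm (riemann_sum h (\<lambda>y. g (x - y)) - (\<integral>y. g (x - y) \<partial>\<mu>)) \<le> e) (at_right 0)"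
proof -
  have "e/3 > 0" using e by simp
  from translates_equicontinuous[OF g this] obtain \<delta> where "\<delta> > 0"
    and sums: "\<And>x z h. x \<in> cell_ball \<Longrightarrow> z \<in> cell_ball \<Longrightarrow> dist z x < \<delta> \<Longrightarrow> 0 < h \<Longrightarrow> h \<le> 1 \<Longrightarrow>
           norm (riemann_sum h (\<lambda>y. g (x - y)) - riemann_sum h (\<lambda>y. g (z - y))) \<le> e/3"
    and integrals: "\<And>x z. x \<in> cell_ball \<Longrightarrow> z \<in> cell_ball \<Longrightarrow> dist z x < \<delta> \<Longrightarrow>
           norm ((\<integral>y. g (z - y) \<partial>\<mu>) - (\<integral>y. g (x - y) \<partial>\<mu>)) \<le> e/3"
    by metis
  have "\<exists>Z. finite Z \<and> Z \<subseteq> cell_ball \<and> cell_ball \<subseteq> (\<Union>z\<in>Z. ball z \<delta>)"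
    using seq_compact_imp_totally_bounded[OF compact_imp_seq_compact[OF compact_cball]] \<open>\<delta> > 0\<close>
    by blast
  then obtain Z where "finite Z" "Z \<subseteq> cell_ball" and net: "cell_ball \<subseteq> (\<Union>z\<in>Z. ball z \<delta>)"
    by blast
  have "eventually (\<lambda>h. dist (riemann_sum h (\<lambda>y. g (z - y))) (\<integral>y. g (z - y) \<partial>\<mu>) < e/3) (at_right 0)"
    for z using e by (intro tendstoD[OF riemann_sum_tendsto_vec] continuous_on_translate[OF g]) simp
  then have "eventually (\<lambda>h. \<forall>z\<in>Z. dist (riemann_sum h (\<lambda>y. g (z - y))) (\<integral>y. g (z - y) \<partial>\<mu>) < e/3)
               (at_right 0)"
    using \<open>finite Z\<close> by (intro eventually_ball_finite) auto
  moreover have "eventually (\<lambda>h::real. 0 < h \<and> h \<le> 1) (at_right 0)"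
    unfolding eventually_at_right_field by (intro exI[of _ 1]) auto
  ultimately show ?thesis
  proof eventually_elim
    case (elim h)
    show ?case
    proof
      fix x assume x: "x \<in> cell_ball"
      then obtain z where z: "z \<in> Z" "dist z x < \<delta>" using net by auto
      with \<open>Z \<subseteq> cell_ball\<close> have "z \<in> cell_ball" by auto
      have "norm (riemann_sum h (\<lambda>y. g (z - y)) - (\<integral>y. g (z - y) \<partial>\<mu>)) \<le> e/3"
        using elim(1) z(1) by (auto simp: dist_norm)
      with sums[OF x \<open>z \<in> cell_ball\<close> z(2)] integrals[OF x \<open>z \<in> cell_ball\<close> z(2)] elim(2)
      have "norm (riemann_sum h (\<lambda>y. g (x - y)) - (\<integral>y. g (x - y) \<partial>\<mu>)) \<le> e/3 + (e/3 + e/3)"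
        by (blast intro: norm_diff_triangle_le)
      then show "norm (riemann_sum h (\<lambda>y. g (x - y)) - (\<integral>y. g (x - y) \<partial>\<mu>)) \<le> e" by simp
    qed
  qed
qed

definition conv_grad :: "(real^'d \<Rightarrow> real) \<Rightarrow> real^'d \<Rightarrow> real^'d" where
  "conv_grad W x = (\<integral>y. grad W (x - y) \<partial>\<mu>)"

lemma continuous_on_conv_grad: "C1fun W \<Longrightarrow> continuous_on UNIV (conv_grad W)"
  unfolding conv_grad_def C1fun_def by (intro continuous_on_convolution) auto

lemma convolution_has_derivative:
  assumes W: "C1fun W"
  shows "((\<lambda>x. \<integral>y. W (x - y) \<partial>\<mu>) has_derivative (\<lambda>v. conv_grad W x \<bullet> v)) (at x)"
  unfolding has_derivative_at_alt
proof (intro conjI allI impI)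
  show "bounded_linear (\<lambda>v. conv_grad W x \<bullet> v)" by (rule bounded_linear_inner_right)
  fix e :: real assume "e > 0"
  let ?K = "cball (0::real^'d) (norm x + 1 + (\<Omega>_radius + real CARD('d)))"
  obtain \<delta> where "\<delta> > 0" and \<delta>: "\<forall>p\<in>?K. \<forall>q\<in>?K. dist p q < \<delta> \<longrightarrow>
      \<bar>W q - W p - grad W p \<bullet> (q - p)\<bar> \<le> e * norm (q - p)"
    using C1fun_uniform_taylor[OF W compact_cball convex_cball \<open>e > 0\<close>] by blast
  have cont: "continuous_on UNIV W" "continuous_on UNIV (grad W)"
    using W C1fun_continuous_on by (auto simp: C1fun_def)
  have "norm ((\<integral>z. W (y - z) \<partial>\<mu>) - (\<integral>z. W (x - z) \<partial>\<mu>) - conv_grad W x \<bullet> (y - x)) \<le> e * norm (y - x)"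
    if y: "norm (y - x) < min 1 \<delta>" for y
  proof -
    have "(\<integral>z. W (y - z) \<partial>\<mu>) - (\<integral>z. W (x - z) \<partial>\<mu>) - conv_grad W x \<bullet> (y - x)
        = (\<integral>z. W (y - z) - W (x - z) - grad W (x - z) \<bullet> (y - x) \<partial>\<mu>) - (\<integral>z. 0 \<partial>\<mu>)"
      using cont by (simp add: conv_grad_def continuous_imp_integrable continuous_on_translate)
    also have "norm \<dots> \<le> e * norm (y - x)"
    proof (rule norm_integral_diff_le)
      show "continuous_on UNIV (\<lambda>z. W (y - z) - W (x - z) - grad W (x - z) \<bullet> (y - x))"
        using cont by (intro continuous_intros continuous_on_translate)
      fix z assume "z \<in> \<Omega>"
      then have "norm z \<le> \<Omega>_radius + real CARD('d)" using \<Omega>_subset_cell_ball by auto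
      moreover have "norm y \<le> norm x + 1" using y norm_triangle_sub[of y x] by simp
      ultimately have "x - z \<in> ?K" "y - z \<in> ?K"
        using norm_triangle_ineq4[of x z] norm_triangle_ineq4[of y z] by simp_all
      moreover have "dist (x - z) (y - z) < \<delta>" using y by (simp add: dist_norm norm_minus_commute)
      ultimately show "norm (W (y - z) - W (x - z) - grad W (x - z) \<bullet> (y - x) - 0) \<le> e * norm (y - x)"
        using \<delta> by fastforce
    qed simp
    finally show ?thesis .
  qed
  then show "\<exists>d>0. \<forall>y. norm (y - x) < d \<longrightarrow>
      norm ((\<integral>z. W (y - z) \<partial>\<mu>) - (\<integral>z. W (x - z) \<partial>\<mu>) - conv_grad W x \<bullet> (y - x)) \<le> e * norm (y - x)"
    using \<open>\<delta> > 0\<close> by (intro exI[of _ "min 1 \<delta>"]) auto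
qed

lemma grad_Qpot:
  assumes "C1fun V" "C1fun W"
  shows "grad (Qpot V W \<mu>) x = grad V x + conv_grad W x"
proof (rule grad_eqI)
  have "((\<lambda>x. V x + (\<integral>y. W (x - y) \<partial>\<mu>)) has_derivative (\<lambda>v. grad V x \<bullet> v + conv_grad W x \<bullet> v)) (at x)"
    using assms by (intro has_derivative_add has_derivative_grad convolution_has_derivative)
                   (auto simp: C1fun_def)
  then show "(Qpot V W \<mu> has_derivative (\<lambda>v. (grad V x + conv_grad W x) \<bullet> v)) (at x)"
    by (simp add: Qpot_def[abs_def] inner_add_left)
qed

text \<open>The shifts \<open>c \<in> C\<close> let one statement serve both \<open>V\<close> (\<open>C = {0}\<close>) and the translates
  \<open>W (_ - x\<^sub>M)\<close> (\<open>C = cell_ball\<close>).\<close>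
lemma edge_taylor:
  assumes f: "C1fun f" and e: "e > 0" and S: "compact S" "convex S"
    and shifts: "\<And>h k c. 0 < h \<Longrightarrow> h \<le> 1 \<Longrightarrow> k \<in> cl h \<Longrightarrow> c \<in> C \<Longrightarrow> ctr h k - c \<in> S"
  shows "eventually (\<lambda>h. \<forall>(k,l)\<in>E h. \<forall>c\<in>C.
           \<bar>f (ctr h l - c) - f (ctr h k - c) - grad f (ctr h k - c) \<bullet> (ctr h l - ctr h k)\<bar> \<le> e * h)
         (at_right 0)"
proof -
  obtain \<delta> where "\<delta> > 0" and \<delta>: "\<forall>x\<in>S. \<forall>y\<in>S. dist x y < \<delta> \<longrightarrow>
      \<bar>f y - f x - grad f x \<bullet> (y - x)\<bar> \<le> e * norm (y - x)"
    using C1fun_uniform_taylor[OF f S e] by blast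
  have "\<bar>f (ctr h l - c) - f (ctr h k - c) - grad f (ctr h k - c) \<bullet> (ctr h l - ctr h k)\<bar> \<le> e * h"
    if h: "0 < h" "h < min 1 \<delta>" and kl: "(k,l) \<in> E h" and c: "c \<in> C" for h k l c
  proof -
    have norm_step: "norm ((ctr h l - c) - (ctr h k - c)) = h"
      using dist_center_nbr[of l k h "a h"] kl h by (auto simp: edges_eq_Sigma dist_norm norm_minus_commute)
    moreover have "ctr h k - c \<in> S" "ctr h l - c \<in> S" using shifts h kl c by (auto simp: edges_eq_Sigma)
    moreover have "dist (ctr h k - c) (ctr h l - c) < \<delta>"
      using norm_step h by (simp add: dist_norm norm_minus_commute)
    ultimately show ?thesis using \<delta> by fastforce
  qed
  then show ?thesis
    unfolding eventually_at_right_field using \<open>\<delta> > 0\<close> by (intro exI[of _ "min 1 \<delta>"]) auto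
qed

lemma qflux_eq_riemann_sum:
  "qflux V W \<Omega> h (a h) (\<rho>h h) k l
     = V (ctr h l) - V (ctr h k) + riemann_sum h (\<lambda>y. W (ctr h l - y) - W (ctr h k - y))"
  by (simp add: qflux_def riemann_sum_def)

lemma qflux_edge_close:
  assumes h: "0 < h" "h \<le> 1" and kl: "(k,l) \<in> E h"
    and V_taylor: "\<bar>V (ctr h l) - V (ctr h k) - grad V (ctr h k) \<bullet> (ctr h l - ctr h k)\<bar> \<le> c * h"
    and W_taylor: "\<And>y. y \<in> cell_ball \<Longrightarrow>
          \<bar>W (ctr h l - y) - W (ctr h k - y) - grad W (ctr h k - y) \<bullet> (ctr h l - ctr h k)\<bar> \<le> c * h"
    and conv: "norm (riemann_sum h (\<lambda>y. grad W (ctr h k - y)) - conv_grad W (ctr h k)) \<le> c"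
  shows "\<bar>qflux V W \<Omega> h (a h) (\<rho>h h) k l
           - (grad V (ctr h k) + conv_grad W (ctr h k)) \<bullet> (ctr h l - ctr h k)\<bar> \<le> 3 * c * h"
proof -
  let ?u = "ctr h l - ctr h k"
  have "norm ?u = h"
    using dist_center_nbr[of l k h "a h"] kl h by (auto simp: edges_eq_Sigma dist_norm norm_minus_commute)
  define B where "B = riemann_sum h (\<lambda>y. W (ctr h l - y) - W (ctr h k - y) - grad W (ctr h k - y) \<bullet> ?u)"
  define C where "C = (riemann_sum h (\<lambda>y. grad W (ctr h k - y)) - conv_grad W (ctr h k)) \<bullet> ?u"
  have "norm B \<le> c * h"
    unfolding B_def using h W_taylor by (intro norm_riemann_sum_le) auto
  moreover have "\<bar>C\<bar> \<le> c * h"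
  proof -
    have "\<bar>C\<bar> \<le> norm (riemann_sum h (\<lambda>y. grad W (ctr h k - y)) - conv_grad W (ctr h k)) * norm ?u"
      unfolding C_def by (rule Cauchy_Schwarz_ineq2)
    also have "\<dots> \<le> c * h" using conv \<open>norm ?u = h\<close> h by (simp add: mult_right_mono)
    finally show ?thesis .
  qed
  moreover have "B = riemann_sum h (\<lambda>y. W (ctr h l - y) - W (ctr h k - y))
                   - riemann_sum h (\<lambda>y. grad W (ctr h k - y)) \<bullet> ?u"
    unfolding B_def by (simp only: riemann_sum_diff riemann_sum_inner_left)
  then have "qflux V W \<Omega> h (a h) (\<rho>h h) k l - (grad V (ctr h k) + conv_grad W (ctr h k)) \<bullet> ?u
      = (V (ctr h l) - V (ctr h k) - grad V (ctr h k) \<bullet> ?u) + B + C"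
    unfolding C_def qflux_eq_riemann_sum by (simp add: inner_add_left inner_diff_left)
  ultimately show ?thesis using V_taylor by simp
qed

lemma qflux_approx:
  assumes V: "C1fun V" and W: "C1fun W" and e: "e > 0"
  shows "eventually (\<lambda>h. \<forall>(k,l)\<in>E h. \<bar>qflux V W \<Omega> h (a h) (\<rho>h h) k l
            - (grad V (ctr h k) + conv_grad W (ctr h k)) \<bullet> (ctr h l - ctr h k)\<bar> \<le> e * h) (at_right 0)"
proof -
  have "e/3 > 0" using e by simp
  have "eventually (\<lambda>h. \<forall>(k,l)\<in>E h. \<forall>c\<in>{0}.
      \<bar>V (ctr h l - c) - V (ctr h k - c) - grad V (ctr h k - c) \<bullet> (ctr h l - ctr h k)\<bar> \<le> e/3 * h) (at_right 0)"
    by (rule edge_taylor[where S=cell_ball, OF V \<open>e/3 > 0\<close> compact_cball convex_cball])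
       (erule singletonE, simp only: diff_zero, rule center_in_cell_ball)
  moreover have "eventually (\<lambda>h. \<forall>(k,l)\<in>E h. \<forall>c\<in>cell_ball.
      \<bar>W (ctr h l - c) - W (ctr h k - c) - grad W (ctr h k - c) \<bullet> (ctr h l - ctr h k)\<bar> \<le> e/3 * h) (at_right 0)"
    by (rule edge_taylor[where S=diff_ball, OF W \<open>e/3 > 0\<close> compact_cball convex_cball])
       (rule diff_in_diff_ball[OF center_in_cell_ball])
  moreover have "eventually (\<lambda>h. \<forall>x\<in>cell_ball.
      norm (riemann_sum h (\<lambda>y. grad W (x - y)) - conv_grad W x) \<le> e/3) (at_right 0)"
    unfolding conv_grad_def using W \<open>e/3 > 0\<close>
    by (intro riemann_sum_convolution_uniform) (auto simp: C1fun_def)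
  moreover have "eventually (\<lambda>h::real. 0 < h \<and> h \<le> 1) (at_right 0)"
    unfolding eventually_at_right_field by (intro exI[of _ 1]) auto
  ultimately show ?thesis
  proof eventually_elim
    case (elim h)
    have "\<bar>qflux V W \<Omega> h (a h) (\<rho>h h) k l
           - (grad V (ctr h k) + conv_grad W (ctr h k)) \<bullet> (ctr h l - ctr h k)\<bar> \<le> 3 * (e/3) * h"
      if kl: "(k,l) \<in> E h" for k l
      using elim center_in_cell_ball[of h k] kl
      by (intro qflux_edge_close[OF _ _ kl]) (auto simp: edges_eq_Sigma)
    then show ?case by auto
  qed
qed

lemma Rstar_gradbar_tendsto:
  assumes "C1fun \<phi>"
    and "\<forall>\<epsilon>>0. \<forall>\<^sub>F h in at_right 0. \<forall>(k,l)\<in>E h.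
           \<bar>\<phi>h h l - \<phi>h h k - grad \<phi> (ctr h k) \<bullet> (ctr h l - ctr h k)\<bar> \<le> \<epsilon> * h"
  shows "((\<lambda>h. Rstar \<Omega> h (a h) (\<rho>h h) (gradbar (\<phi>h h)))
           \<longlongrightarrow> (1/2) * (LINT x:\<Omega>|\<mu>. (norm (grad \<phi> x))\<^sup>2)) (at_right 0)"
  using assms by (intro Rstar_tendsto) (auto simp: C1fun_def gradbar_def)

lemma Dup_tendsto:
  assumes "C1fun V" "C1fun W"
  shows "((\<lambda>h. Dup V W \<Omega> h (a h) (\<rho>h h))
           \<longlongrightarrow> (1/2) * (LINT x:\<Omega>|\<mu>. (norm (grad (Qpot V W \<mu>) x))\<^sup>2)) (at_right 0)"
proof -
  have "((\<lambda>h. Rstar \<Omega> h (a h) (\<rho>h h) (qflux V W \<Omega> h (a h) (\<rho>h h)))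
          \<longlongrightarrow> (1/2) * (LINT x:\<Omega>|\<mu>. (norm (grad V x + conv_grad W x))\<^sup>2)) (at_right 0)"
    using assms
    by (intro Rstar_tendsto qflux_approx continuous_intros continuous_on_conv_grad)
       (auto simp: C1fun_def)
  moreover have "grad (Qpot V W \<mu>) = (\<lambda>x. grad V x + conv_grad W x)"
    using grad_Qpot[OF assms] by auto
  ultimately show ?thesis by (simp add: Dup_def)
qed

end

theorem theorem6p2:
  fixes \<Omega> :: "(real^'d) set"
    and a :: "real \<Rightarrow> real^'d"
    and \<rho>h :: "real \<Rightarrow> int^'d \<Rightarrow> real"
    and \<mu> :: "(real^'d) measure"
    and V W :: "real^'d \<Rightarrow> real"
  assumes \<Omega>: "open \<Omega>" "bounded \<Omega>" "convex \<Omega>"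
    and \<rho>h_prob: "\<And>h k. h > 0 \<Longrightarrow> k \<in> cells \<Omega> h (a h) \<Longrightarrow> \<rho>h h k \<ge> 0"
    and \<rho>h_sum: "\<And>h. h > 0 \<Longrightarrow> (\<Sum>k\<in>cells \<Omega> h (a h). \<rho>h h k) = 1"
    and \<mu>_prob: "prob_space \<mu>" "sets \<mu> = sets borel" "measure \<mu> \<Omega> = 1"
    and weak: "\<And>f :: real^'d \<Rightarrow> real. continuous_on UNIV f \<Longrightarrow> bounded (range f) \<Longrightarrow>
        ((\<lambda>h. \<integral>x. f x \<partial>(rhohat \<Omega> h (a h) (\<rho>h h))) \<longlongrightarrow> (\<integral>x. f x \<partial>\<mu>)) (at_right 0)"
    and V: "\<exists>L. L-lipschitz_on UNIV V" "C1fun V" "bdd_below (range V)"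
    and W: "\<And>x. W x \<ge> 0" "\<And>x. W (- x) = W x"
  shows
    "(\<forall>(\<phi> :: real^'d \<Rightarrow> real) (\<phi>h :: real \<Rightarrow> int^'d \<Rightarrow> real).
        C1fun \<phi> \<and> bounded (range \<phi>) \<and> bounded (range (grad \<phi>)) \<and>
        (\<forall>\<epsilon>>0. \<forall>\<^sub>F h in at_right 0. \<forall>(k,l)\<in>edges \<Omega> h (a h).
            \<bar>\<phi>h h l - \<phi>h h k - grad \<phi> (center h (a h) k) \<bullet> (center h (a h) l - center h (a h) k)\<bar>
              \<le> \<epsilon> * h)
      \<longrightarrow> ((\<lambda>h. Rstar \<Omega> h (a h) (\<rho>h h) (gradbar (\<phi>h h)))
            \<longlongrightarrow> (1/2) * (LINT x:\<Omega>|\<mu>. (norm (grad \<phi> x))\<^sup>2)) (at_right 0))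
     \<and> ((\<exists>L. L-lipschitz_on UNIV W) \<and> C1fun W
      \<longrightarrow> ((\<lambda>h. Dup V W \<Omega> h (a h) (\<rho>h h))
            \<longlongrightarrow> (1/2) * (LINT x:\<Omega>|\<mu>. (norm (grad (Qpot V W \<mu>) x))\<^sup>2)) (at_right 0))"
proof -
  interpret grid_weak_convergence \<mu> \<Omega> a \<rho>h
    using \<mu>_prob \<Omega> \<rho>h_prob \<rho>h_sum weak
    by (intro grid_weak_convergence.intro grid_weak_convergence_axioms.intro) auto
  show ?thesis
    using Rstar_gradbar_tendsto Dup_tendsto[OF V(2)] by blast
qed

end
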